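(* Let $D$ and $E$ be finite sets with $|D|,|E|\ge 2$, let $P:D\times E\to\{0,1\}$ be a binary predicate, and let $0<\varepsilon<1$. (1) If there exist a two-element subset $B\subseteq D$ and a two-element subset $C\subseteq E$ such that $P|_{B\times C}$ is a singleton, then there exists an instance $I$ of $\mathrm{CSP}(P)$ such that every $\varepsilon$-sparsifier of $I$ has $\Omega(n^2)$ constraints, where $n$ is the number of variables of $I$ (i.e., there is a constant $c>0$ such that for infinitely many $n$ there is such an instance on $n$ variables with all $\varepsilon$-sparsifiers having at least $cn^2$ constraints). (2) Otherwise, for every instance $I$ of $\mathrm{CSP}(P)$ on $n$ variables there exists an $\varepsilon$-sparsifier of $I$ with $O(\varepsilon^{-2}n)$ constraints, where the implied constant does not depend on $I$, $n$ or $\varepsilon$.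
   Context: An instance of $\mathrm{CSP}(P)$ for $P:D\times E\to\{0,1\}$ is $I=(V,\Pi,w)$ with $V$ a finite set of $n=|V|$ variables, $\Pi$ a set of constraints $\langle(u,v),P\rangle$ with $u,v\in V$ distinct, and $w:\Pi\to\mathbb{R}_{>0}$. An assignment $A:V\to D\cup E$ is valid if each variable receives a label lying in the intersection of the domains of the constraint positions it occupies: $A(u)\in D$ whenever $u$ is the first variable of some constraint and $A(v)\in E$ whenever $v$ is the second variable of some constraint. $\mathrm{Val}_I(A)=\sum_{\pi=\langle(u,v),P\rangle\in\Pi}w(\pi)P(A(u),A(v))$. An $\varepsilon$-sparsifier of $I$ is $I_\varepsilon=(V,\Pi_\varepsilon,w_\varepsilon)$ with $\Pi_\varepsilon\subseteq\Pi$, $w_\varepsilon:\Pi_\varepsilon\to\mathbb{R}_{>0}$, such that for every valid assignment $A$ of $I$, $(1-\varepsilon)\mathrm{Val}_I(A)\le\mathrm{Val}_{I_\varepsilon}(A)\le(1+\varepsilon)\mathrm{Val}_I(A)$; its number of constraints is $|\Pi_\varepsilon|$. A predicate is a singleton if exactly one tuple is mapped to $1$; $P|_{B\times C}$ is the restriction of $P$ to $B\times C$. *)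

theory Defs
  imports Complex_Main
begin

text \<open>Since the predicate P is fixed, a constraint is identified with its ordered pair of
  (distinct) variables (u,v); an instance is (V, Cs, w) with Cs a set of such pairs.
  The predicate P : D x E -> {0,1} is a boolean function on a common label type 'a;
  its values outside D x E never matter for valid assignments.\<close>

definition csp_instance :: "'v set \<Rightarrow> ('v \<times> 'v) set \<Rightarrow> ('v \<times> 'v \<Rightarrow> real) \<Rightarrow> bool" where
  "csp_instance V Cs w \<longleftrightarrow> finite V \<and> Cs \<subseteq> {(u, v). u \<in> V \<and> v \<in> V \<and> u \<noteq> v}
     \<and> (\<forall>c\<in>Cs. w c > 0)"

definition valid_assignment :: "'a set \<Rightarrow> 'a set \<Rightarrow> 'v set \<Rightarrow> ('v \<times> 'v) set \<Rightarrow> ('v \<Rightarrow> 'a) \<Rightarrow> bool" where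
  "valid_assignment D E V Cs A \<longleftrightarrow> (\<forall>v\<in>V. A v \<in> D \<union> E)
     \<and> (\<forall>(u, v)\<in>Cs. A u \<in> D \<and> A v \<in> E)"

definition csp_val :: "('a \<Rightarrow> 'a \<Rightarrow> bool) \<Rightarrow> ('v \<times> 'v) set \<Rightarrow> ('v \<times> 'v \<Rightarrow> real) \<Rightarrow> ('v \<Rightarrow> 'a) \<Rightarrow> real" where
  "csp_val P Cs w A = (\<Sum>(u, v)\<in>Cs. w (u, v) * (if P (A u) (A v) then 1 else 0))"

definition is_sparsifier ::
  "'a set \<Rightarrow> 'a set \<Rightarrow> ('a \<Rightarrow> 'a \<Rightarrow> bool) \<Rightarrow> real \<Rightarrow> 'v set \<Rightarrow> ('v \<times> 'v) set \<Rightarrow> ('v \<times> 'v \<Rightarrow> real)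
    \<Rightarrow> ('v \<times> 'v) set \<Rightarrow> ('v \<times> 'v \<Rightarrow> real) \<Rightarrow> bool" where
  "is_sparsifier D E P \<epsilon> V Cs w Cs' w' \<longleftrightarrow> Cs' \<subseteq> Cs \<and> (\<forall>c\<in>Cs'. w' c > 0)
     \<and> (\<forall>A. valid_assignment D E V Cs A \<longrightarrow>
          (1 - \<epsilon>) * csp_val P Cs w A \<le> csp_val P Cs' w' A
        \<and> csp_val P Cs' w' A \<le> (1 + \<epsilon>) * csp_val P Cs w A)"

definition has_singleton_2x2 :: "'a set \<Rightarrow> 'a set \<Rightarrow> ('a \<Rightarrow> 'a \<Rightarrow> bool) \<Rightarrow> bool" where
  "has_singleton_2x2 D E P \<longleftrightarrow> (\<exists>B C. B \<subseteq> D \<and> card B = 2 \<and> C \<subseteq> E \<and> card C = 2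
     \<and> card {(b, c). b \<in> B \<and> c \<in> C \<and> P b c} = 1)"

end

theory Submission
  imports Defs "Jordan_Normal_Form.Determinant" "Jordan_Normal_Form.Gauss_Jordan_Elimination"
begin

text \<open>If \<open>P\<close> restricted to \<open>{b\<^sub>1, b\<^sub>2} \<times> {c\<^sub>1, c\<^sub>2}\<close> is the singleton \<open>{(b\<^sub>1, c\<^sub>1)}\<close>, take
  the complete bipartite instance on \<open>m + m\<close> variables. For each constraint \<open>(u, v)\<close>, the
  assignment \<open>u \<mapsto> b\<^sub>1\<close>, \<open>v \<mapsto> c\<^sub>1\<close>, every other variable to \<open>b\<^sub>2\<close> or \<open>c\<^sub>2\<close>, satisfies \<open>(u, v)\<close>
  alone, so every sparsifier keeps all \<open>m\<^sup>2\<close> constraints.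

  Otherwise the sets \<open>{b. \<not> P a b}\<close> are pairwise equal or disjoint, so \<open>P a b\<close> holds iff two
  labels of \<open>a\<close> and \<open>b\<close> differ. The value of an assignment is then half the sum, over all labels,
  of the Laplacian quadratic forms of the label indicators on the bipartite double cover of the
  instance, so a spectral sparsifier of that graph is a CSP sparsifier. Graphs on \<open>N\<close> vertices
  have spectral sparsifiers with \<open>O(N/\<epsilon>\<^sup>2)\<close> edges: sparsify each connected component separately,
  using the barrier-potential method of Batson, Spielman and Srivastava for the incidence vectors
  grounded at a root vertex, which span.\<close>

section \<open>Positive definite matrices\<close>

definition quad_form :: "real mat \<Rightarrow> real vec \<Rightarrow> real" where
  "quad_form A x = x \<bullet> (A *\<^sub>v x)"

definition pos_def :: "nat \<Rightarrow> real mat \<Rightarrow> bool" where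
  "pos_def n A \<longleftrightarrow> A \<in> carrier_mat n n \<and> transpose_mat A = A \<and>
     (\<forall>x\<in>carrier_vec n. x \<noteq> 0\<^sub>v n \<longrightarrow> quad_form A x > 0)"

definition pos_semidef :: "nat \<Rightarrow> real mat \<Rightarrow> bool" where
  "pos_semidef n A \<longleftrightarrow> A \<in> carrier_mat n n \<and> transpose_mat A = A \<and>
     (\<forall>x\<in>carrier_vec n. quad_form A x \<ge> 0)"

definition mat_inv :: "real mat \<Rightarrow> real mat" where
  "mat_inv A = the (mat_inverse A)"

definition mat_trace :: "real mat \<Rightarrow> real" where
  "mat_trace A = (\<Sum>i<dim_row A. A $$ (i, i))"

lemma mat_trace_one: "mat_trace (1\<^sub>m n) = real n"
  unfolding mat_trace_def by simp

lemma pos_def_imp_pos_semidef: "pos_def n A \<Longrightarrow> pos_semidef n A"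
  unfolding pos_def_def pos_semidef_def quad_form_def
  by (metis mult_mat_vec_carrier scalar_prod_left_zero less_eq_real_def order_refl)

lemma symmetric_scalar_prod_swap:
  fixes A :: "real mat"
  assumes A: "A \<in> carrier_mat n n" and sym: "transpose_mat A = A"
    and x: "x \<in> carrier_vec n" and y: "y \<in> carrier_vec n"
  shows "x \<bullet> (A *\<^sub>v y) = y \<bullet> (A *\<^sub>v x)"
proof -
  have "x \<bullet> (A *\<^sub>v y) = (transpose_mat A *\<^sub>v x) \<bullet> y"
    by (rule transpose_vec_mult_scalar[OF A y x, symmetric])
  also have "\<dots> = y \<bullet> (A *\<^sub>v x)"
    using sym A x y by (simp add: comm_scalar_prod[of _ n])
  finally show ?thesis .
qed

lemma pos_def_det_nonzero: "pos_def n A \<Longrightarrow> det A \<noteq> 0"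
  using det_0_iff_vec_prod_zero_field[of A n]
  unfolding pos_def_def quad_form_def by fastforce

lemma pos_def_mat_inv:
  assumes "pos_def n A"
  shows "mat_inv A \<in> carrier_mat n n" "A * mat_inv A = 1\<^sub>m n" "mat_inv A * A = 1\<^sub>m n"
proof -
  have A: "A \<in> carrier_mat n n" using assms unfolding pos_def_def by auto
  have "A \<in> Units (ring_mat TYPE(real) n ())"
    by (rule det_non_zero_imp_unit[OF A pos_def_det_nonzero[OF assms]])
  then obtain B where B: "mat_inverse A = Some B"
    using mat_inverse(1)[OF A, of "()"] by (cases "mat_inverse A") auto
  then show "mat_inv A \<in> carrier_mat n n" "A * mat_inv A = 1\<^sub>m n" "mat_inv A * A = 1\<^sub>m n"
    using mat_inverse(2)[OF A B] unfolding mat_inv_def by auto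
qed

lemma transpose_mat_inv:
  assumes "pos_def n A" shows "transpose_mat (mat_inv A) = mat_inv A"
proof -
  have A: "A \<in> carrier_mat n n" and sym: "transpose_mat A = A"
    using assms unfolding pos_def_def by auto
  note inv = pos_def_mat_inv[OF assms]
  have Ti: "transpose_mat (mat_inv A) \<in> carrier_mat n n" using inv(1) by simp
  have left_inv: "transpose_mat (mat_inv A) * A = 1\<^sub>m n"
    using transpose_mult[OF A inv(1)] inv(2) sym by simp
  have "transpose_mat (mat_inv A) = transpose_mat (mat_inv A) * (A * mat_inv A)"
    using inv(2) Ti by simp
  also have "\<dots> = (transpose_mat (mat_inv A) * A) * mat_inv A"
    using assoc_mult_mat[OF Ti A inv(1)] by simp
  finally show ?thesis using left_inv inv(1) by simp
qed

lemma pos_def_mat_inv_pos_def: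
  assumes "pos_def n A" shows "pos_def n (mat_inv A)"
proof -
  have A: "A \<in> carrier_mat n n" using assms unfolding pos_def_def by auto
  note inv = pos_def_mat_inv[OF assms]
  have "quad_form (mat_inv A) x > 0" if x: "x \<in> carrier_vec n" "x \<noteq> 0\<^sub>v n" for x
  proof -
    define y where "y = mat_inv A *\<^sub>v x"
    have y: "y \<in> carrier_vec n" unfolding y_def using inv x by simp
    have Ay: "A *\<^sub>v y = x" unfolding y_def using inv x A
      by (metis assoc_mult_mat_vec one_mult_mat_vec)
    then have "y \<noteq> 0\<^sub>v n" using x A by auto
    then have "quad_form A y > 0" using assms y unfolding pos_def_def by auto
    then show ?thesis
      using Ay x y comm_scalar_prod[of x n y] unfolding quad_form_def y_def by simp
  qed
  then show ?thesis unfolding pos_def_def using inv transpose_mat_inv[OF assms] by auto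
qed

lemma pos_semidef_cauchy_schwarz:
  assumes "pos_semidef n A" and x: "x \<in> carrier_vec n" and y: "y \<in> carrier_vec n"
  shows "(x \<bullet> (A *\<^sub>v y))^2 \<le> quad_form A x * quad_form A y"
proof -
  have A: "A \<in> carrier_mat n n" and sym: "transpose_mat A = A"
    using assms unfolding pos_semidef_def by auto
  let ?a = "quad_form A y" and ?b = "x \<bullet> (A *\<^sub>v y)" and ?c = "quad_form A x"
  have expand: "quad_form A (x + t \<cdot>\<^sub>v y) = ?c + 2 * t * ?b + t^2 * ?a" for t
  proof -
    have "A *\<^sub>v (x + t \<cdot>\<^sub>v y) = A *\<^sub>v x + t \<cdot>\<^sub>v (A *\<^sub>v y)"
      using A x y by (simp add: mult_add_distrib_mat_vec mult_mat_vec)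
    then have "quad_form A (x + t \<cdot>\<^sub>v y)
        = ?c + t * ?b + t * (y \<bullet> (A *\<^sub>v x)) + t * t * ?a"
      unfolding quad_form_def using A x y
      by (simp add: add_scalar_prod_distrib[of _ n] scalar_prod_add_distrib[of _ n] algebra_simps)
    then show ?thesis
      using symmetric_scalar_prod_swap[OF A sym y x] by (simp add: power2_eq_square)
  qed
  have nonneg: "?c + 2 * t * ?b + t^2 * ?a \<ge> 0" for t
  proof -
    have "quad_form A (x + t \<cdot>\<^sub>v y) \<ge> 0" using assms x y unfolding pos_semidef_def by simp
    then show ?thesis using expand by simp
  qed
  show ?thesis
  proof (cases "?a = 0")
    case True
    have "?b = 0"
    proof (rule ccontr)
      assume "?b \<noteq> 0"
      then show False using nonneg[of "- (?c + 1) / (2 * ?b)"] True by (simp add: field_simps)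
    qed
    then show ?thesis using True by simp
  next
    case False
    then have a: "?a > 0" using assms y unfolding pos_semidef_def by force
    have "?c - ?b^2 / ?a \<ge> 0"
      using nonneg[of "- ?b / ?a"] a by (simp add: power2_eq_square field_simps)
    then show ?thesis using a by (simp add: field_simps)
  qed
qed

lemma add_cauchy_schwarz:
  fixes A a P Q p q :: real
  assumes "A^2 \<le> P * Q" "a^2 \<le> p * q" "P \<ge> 0" "Q \<ge> 0" "p \<ge> 0" "q \<ge> 0"
  shows "(A + a)^2 \<le> (P + p) * (Q + q)"
proof -
  have "(A * a)^2 \<le> (P * q) * (p * Q)"
    using mult_mono[OF assms(1,2)] assms by (simp add: power_mult_distrib algebra_simps)
  then have "A * a \<le> sqrt (P * q) * sqrt (p * Q)"
    by (metis abs_ge_self order_trans real_sqrt_abs real_sqrt_le_mono real_sqrt_mult)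
  also have "\<dots> \<le> (P * q + p * Q) / 2"
    \<comment> \<open>AM-GM\<close>
    using sum_squares_bound[of "sqrt (P * q)" "sqrt (p * Q)"] assms
    by (simp add: power2_eq_square mult_nonneg_nonneg)
  finally show ?thesis using assms(1,2) by (simp add: power2_eq_square algebra_simps)
qed

lemma sum_cauchy_schwarz:
  fixes a p q :: "'j \<Rightarrow> real"
  assumes "finite J" "\<And>j. j \<in> J \<Longrightarrow> (a j)^2 \<le> p j * q j"
    "\<And>j. j \<in> J \<Longrightarrow> p j \<ge> 0" "\<And>j. j \<in> J \<Longrightarrow> q j \<ge> 0"
  shows "(\<Sum>j\<in>J. a j)^2 \<le> (\<Sum>j\<in>J. p j) * (\<Sum>j\<in>J. q j)"
  using assms
proof (induction J rule: finite_induct)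
  case (insert j F)
  then show ?case
    by (simp add: add_cauchy_schwarz sum_nonneg)
qed simp

section \<open>Spectral sparsification of a spanning family of vectors\<close>

lemma lower_shift_arith:
  fixes a d e P :: real
  assumes "a > 0" "d > 0" "e \<ge> 0" "a^2 \<le> P * e" "d * P \<le> 1" "P \<ge> 0"
  shows "(a + d * e) / (d * a) - (P + d * a) \<ge> 1 / d - P"
proof -
  have "d * a^2 \<le> (d * P) * e" using assms by (simp add: mult_left_mono)
  also have "\<dots> \<le> e" using assms by (simp add: mult_left_le_one_le)
  finally have "e / a \<ge> d * a" using assms by (simp add: field_simps power2_eq_square)
  moreover have "(a + d * e) / (d * a) = 1 / d + e / a" using assms by (simp add: field_simps)
  ultimately show ?thesis by simp
qed

lemma sparsification_parameters_arith:
  fixes \<epsilon> N q :: real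
  assumes \<epsilon>: "0 < \<epsilon>" "\<epsilon> < 1" and N: "N \<ge> 0" and q: "q \<ge> 18 * N / \<epsilon>^2"
  shows "(1 - \<epsilon>) * (20 * N / \<epsilon> + q * (1 + 3 * \<epsilon> / 10)) \<le> (1 + \<epsilon>) * (q - 10 * N / \<epsilon>)"
proof -
  have "q * \<epsilon> \<ge> 18 * N / \<epsilon>" using q \<epsilon> by (simp add: field_simps power2_eq_square)
  then have "q * (17 / 10 * \<epsilon>) \<ge> 17 / 10 * (18 * N / \<epsilon>)" by simp
  moreover have "17 / 10 * (18 * N / \<epsilon>) \<ge> N / \<epsilon> * (30 - 10 * \<epsilon>)"
    using \<epsilon> N by (simp add: field_simps)
  moreover have "q * (3 / 10 * \<epsilon>^2) \<ge> 0"
    using q N \<epsilon> by (simp add: order_trans[OF _ q])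
  ultimately have "0 \<le> q * (17 / 10 * \<epsilon>) + q * (3 / 10 * \<epsilon>^2) - N / \<epsilon> * (30 - 10 * \<epsilon>)"
    by linarith
  also have "\<dots> = (1 + \<epsilon>) * (q - 10 * N / \<epsilon>) - (1 - \<epsilon>) * (20 * N / \<epsilon> + q * (1 + 3 * \<epsilon> / 10))"
    using \<epsilon> by (simp add: field_simps power2_eq_square)
  finally show ?thesis by simp
qed

locale spanning_family =
  fixes n :: nat and J :: "'j set" and b :: "'j \<Rightarrow> real vec"
  assumes finite_J: "finite J" and b_carrier: "\<And>j. j \<in> J \<Longrightarrow> b j \<in> carrier_vec n"
    and spanning: "\<And>x. x \<in> carrier_vec n \<Longrightarrow> x \<noteq> 0\<^sub>v n \<Longrightarrow> (\<Sum>j\<in>J. (b j \<bullet> x)^2) > 0"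
begin

definition gram :: "('j \<Rightarrow> real) \<Rightarrow> real mat" where
  "gram g = mat n n (\<lambda>(i, k). \<Sum>j\<in>J. g j * (b j $ i * b j $ k))"

abbreviation frame :: "real mat" where
  "frame \<equiv> gram (\<lambda>_. 1)"

text \<open>For weights \<open>s\<close> with \<open>S = gram s\<close> and \<open>M = frame\<close>, the barrier potentials
  \<open>tr ((u M - S)\<^sup>-\<^sup>1 M)\<close> and \<open>tr ((S - l M)\<^sup>-\<^sup>1 M)\<close> of Batson, Spielman and Srivastava are
  \<open>potential (\<lambda>j. u - s j)\<close> and \<open>potential (\<lambda>j. s j - l)\<close>. Measuring everything relative to \<open>M\<close>
  in this way avoids normalising the family by \<open>M\<^sup>-\<^sup>1\<^sup>/\<^sup>2\<close>.\<close>

definition potential :: "('j \<Rightarrow> real) \<Rightarrow> real" where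
  "potential g = (\<Sum>j\<in>J. b j \<bullet> (mat_inv (gram g) *\<^sub>v b j))"

lemma gram_carrier [simp]: "gram g \<in> carrier_mat n n"
  unfolding gram_def by simp

lemma gram_dims [simp]: "dim_row (gram g) = n" "dim_col (gram g) = n"
  unfolding gram_def by auto

lemma gram_mult_vec_carrier [simp]: "gram g *\<^sub>v x \<in> carrier_vec n"
  unfolding gram_def carrier_vec_def by simp

lemma gram_symmetric: "transpose_mat (gram g) = gram g"
  unfolding gram_def by (intro eq_matI) (auto simp: mult.commute)

lemma b_scalar_prod: "j \<in> J \<Longrightarrow> x \<in> carrier_vec n \<Longrightarrow> b j \<bullet> x = (\<Sum>k<n. b j $ k * x $ k)"
  using b_carrier by (simp add: scalar_prod_def atLeast0LessThan)

lemma gram_mult_vec: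
  assumes x: "x \<in> carrier_vec n"
  shows "gram g *\<^sub>v x = vec n (\<lambda>i. \<Sum>j\<in>J. g j * (b j \<bullet> x) * b j $ i)"
proof (rule eq_vecI)
  fix i assume "i < dim_vec (vec n (\<lambda>i. \<Sum>j\<in>J. g j * (b j \<bullet> x) * b j $ i))"
  then have i: "i < n" by simp
  have "(gram g *\<^sub>v x) $ i = (\<Sum>k<n. \<Sum>j\<in>J. g j * b j $ i * (b j $ k * x $ k))"
    using i x unfolding gram_def
    by (simp add: scalar_prod_def atLeast0LessThan sum_distrib_right mult.assoc)
  also have "\<dots> = (\<Sum>j\<in>J. g j * (b j \<bullet> x) * b j $ i)"
    by (subst sum.swap) (auto simp: b_scalar_prod[OF _ x] sum_distrib_left[symmetric] intro!: sum.cong)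
  finally show "(gram g *\<^sub>v x) $ i = vec n (\<lambda>i. \<Sum>j\<in>J. g j * (b j \<bullet> x) * b j $ i) $ i"
    using i by simp
qed simp

lemma scalar_prod_gram:
  assumes x: "x \<in> carrier_vec n" and y: "y \<in> carrier_vec n"
  shows "y \<bullet> (gram g *\<^sub>v x) = (\<Sum>j\<in>J. g j * (b j \<bullet> x) * (b j \<bullet> y))"
proof -
  have "y \<bullet> (gram g *\<^sub>v x) = (\<Sum>i<n. \<Sum>j\<in>J. g j * (b j \<bullet> x) * (b j $ i * y $ i))"
    using x y by (simp add: gram_mult_vec scalar_prod_def atLeast0LessThan sum_distrib_left algebra_simps)
  also have "\<dots> = (\<Sum>j\<in>J. g j * (b j \<bullet> x) * (b j \<bullet> y))"
    by (subst sum.swap) (auto simp: b_scalar_prod[OF _ y] sum_distrib_left[symmetric] intro!: sum.cong)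
  finally show ?thesis .
qed

lemma quad_form_gram: "x \<in> carrier_vec n \<Longrightarrow> quad_form (gram g) x = (\<Sum>j\<in>J. g j * (b j \<bullet> x)^2)"
  unfolding quad_form_def by (simp add: scalar_prod_gram power2_eq_square mult.assoc)

lemma gram_swap: "x \<in> carrier_vec n \<Longrightarrow> y \<in> carrier_vec n \<Longrightarrow> x \<bullet> (gram g *\<^sub>v y) = y \<bullet> (gram g *\<^sub>v x)"
  by (simp add: scalar_prod_gram mult.commute mult.left_commute)

lemma gram_update_mult_vec:
  assumes x: "x \<in> carrier_vec n" and i: "i \<in> J"
  shows "gram (g(i := g i + t)) *\<^sub>v x = gram g *\<^sub>v x + (t * (b i \<bullet> x)) \<cdot>\<^sub>v b i"
proof -
  have "(\<Sum>j\<in>J. (g(i := g i + t)) j * (b j \<bullet> x) * b j $ k)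
      = (\<Sum>j\<in>J. g j * (b j \<bullet> x) * b j $ k + (if j = i then t * (b i \<bullet> x) * b i $ k else 0))" for k
    by (rule sum.cong) (auto simp: algebra_simps)
  then show ?thesis
    using x b_carrier[OF i] i finite_J by (intro eq_vecI) (auto simp: gram_mult_vec sum.distrib)
qed

lemma gram_shift_mult_vec:
  "x \<in> carrier_vec n \<Longrightarrow> gram (\<lambda>j. g j + c) *\<^sub>v x = gram g *\<^sub>v x + c \<cdot>\<^sub>v (frame *\<^sub>v x)"
  by (intro eq_vecI) (auto simp: gram_mult_vec sum.distrib sum_distrib_left algebra_simps)

lemma quad_form_gram_update:
  "x \<in> carrier_vec n \<Longrightarrow> i \<in> J \<Longrightarrow>
    quad_form (gram (g(i := g i + t))) x = quad_form (gram g) x + t * (b i \<bullet> x)^2"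
  using finite_J by (simp add: quad_form_gram sum.remove algebra_simps)

lemma quad_form_gram_shift:
  "x \<in> carrier_vec n \<Longrightarrow> quad_form (gram (\<lambda>j. g j + c)) x = quad_form (gram g) x + c * quad_form frame x"
  by (simp add: quad_form_gram algebra_simps sum.distrib sum_distrib_left)

lemma quad_form_frame_nonneg: "x \<in> carrier_vec n \<Longrightarrow> quad_form frame x \<ge> 0"
  by (simp add: quad_form_gram sum_nonneg)

lemma pos_def_gram_iff:
  "pos_def n (gram g) \<longleftrightarrow> (\<forall>x\<in>carrier_vec n. x \<noteq> 0\<^sub>v n \<longrightarrow> quad_form (gram g) x > 0)"
  unfolding pos_def_def using gram_symmetric by auto

lemma frame_pos_def: "pos_def n frame"
  unfolding pos_def_gram_iff using spanning by (simp add: quad_form_gram)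

lemma mat_trace_mult_gram:
  assumes N: "N \<in> carrier_mat n n"
  shows "mat_trace (N * gram g) = (\<Sum>j\<in>J. g j * (b j \<bullet> (N *\<^sub>v b j)))"
proof -
  have "mat_trace (N * gram g) = (\<Sum>i<n. \<Sum>k<n. \<Sum>j\<in>J. g j * (b j $ i * (N $$ (i, k) * b j $ k)))"
    unfolding mat_trace_def using N
    by (simp add: gram_def scalar_prod_def atLeast0LessThan sum_distrib_left algebra_simps)
  also have "\<dots> = (\<Sum>j\<in>J. \<Sum>i<n. \<Sum>k<n. g j * (b j $ i * (N $$ (i, k) * b j $ k)))"
    by (simp add: sum.swap[of _ "{..<n}" J] sum.swap[of _ _ J])
  also have "\<dots> = (\<Sum>j\<in>J. g j * (b j \<bullet> (N *\<^sub>v b j)))"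
  proof (intro sum.cong refl)
    fix j assume "j \<in> J"
    then have "b j \<in> carrier_vec n" by (rule b_carrier)
    then show "(\<Sum>i<n. \<Sum>k<n. g j * (b j $ i * (N $$ (i, k) * b j $ k))) = g j * (b j \<bullet> (N *\<^sub>v b j))"
      using N by (simp add: scalar_prod_def atLeast0LessThan sum_distrib_left)
  qed
  finally show ?thesis .
qed

lemma inv_gram_cancel:
  "pos_def n (gram g) \<Longrightarrow> x \<in> carrier_vec n \<Longrightarrow> mat_inv (gram g) *\<^sub>v (gram g *\<^sub>v x) = x"
  using pos_def_mat_inv[of n "gram g"] by (metis gram_carrier assoc_mult_mat_vec one_mult_mat_vec)

lemma gram_cancel_inv:
  "pos_def n (gram g) \<Longrightarrow> x \<in> carrier_vec n \<Longrightarrow> gram g *\<^sub>v (mat_inv (gram g) *\<^sub>v x) = x"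
  using pos_def_mat_inv[of n "gram g"] by (metis gram_carrier assoc_mult_mat_vec one_mult_mat_vec)

lemma inv_gram_carrier [simp]:
  "pos_def n (gram g) \<Longrightarrow> x \<in> carrier_vec n \<Longrightarrow> mat_inv (gram g) *\<^sub>v x \<in> carrier_vec n"
  using pos_def_mat_inv(1)[of n "gram g"] by simp

lemma inv_gram_eqI:
  "pos_def n (gram g) \<Longrightarrow> r \<in> carrier_vec n \<Longrightarrow> gram g *\<^sub>v r = v \<Longrightarrow> mat_inv (gram g) *\<^sub>v v = r"
  using inv_gram_cancel by blast

lemma inv_gram_pos_semidef: "pos_def n (gram g) \<Longrightarrow> pos_semidef n (mat_inv (gram g))"
  using pos_def_imp_pos_semidef pos_def_mat_inv_pos_def by blast

lemma inv_gram_swap: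
  "pos_def n (gram g) \<Longrightarrow> x \<in> carrier_vec n \<Longrightarrow> y \<in> carrier_vec n \<Longrightarrow>
    x \<bullet> (mat_inv (gram g) *\<^sub>v y) = y \<bullet> (mat_inv (gram g) *\<^sub>v x)"
  using symmetric_scalar_prod_swap inv_gram_pos_semidef unfolding pos_semidef_def by blast

lemma inv_gram_nonneg:
  "pos_def n (gram g) \<Longrightarrow> x \<in> carrier_vec n \<Longrightarrow> x \<bullet> (mat_inv (gram g) *\<^sub>v x) \<ge> 0"
  using inv_gram_pos_semidef unfolding pos_semidef_def quad_form_def by blast

lemma potential_nonneg: "pos_def n (gram g) \<Longrightarrow> potential g \<ge> 0"
  unfolding potential_def by (rule sum_nonneg) (use inv_gram_nonneg b_carrier in auto)

lemma resolvent_identity: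
  assumes k: "pos_def n (gram k)" and x: "x \<in> carrier_vec n" and v: "v \<in> carrier_vec n"
    and y: "y \<in> carrier_vec n" and eq: "gram k *\<^sub>v x = v + c \<cdot>\<^sub>v (frame *\<^sub>v x)"
  shows "y \<bullet> x = y \<bullet> (mat_inv (gram k) *\<^sub>v v) + c * (y \<bullet> (mat_inv (gram k) *\<^sub>v (frame *\<^sub>v x)))"
proof -
  have inv: "mat_inv (gram k) \<in> carrier_mat n n" using pos_def_mat_inv(1)[OF k] .
  have "x = mat_inv (gram k) *\<^sub>v (v + c \<cdot>\<^sub>v (frame *\<^sub>v x))"
    using inv_gram_cancel[OF k x] eq by simp
  also have "\<dots> = mat_inv (gram k) *\<^sub>v v + c \<cdot>\<^sub>v (mat_inv (gram k) *\<^sub>v (frame *\<^sub>v x))"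
    using inv v by (simp add: mult_add_distrib_mat_vec mult_mat_vec)
  finally have "y \<bullet> x = y \<bullet> (mat_inv (gram k) *\<^sub>v v + c \<cdot>\<^sub>v (mat_inv (gram k) *\<^sub>v (frame *\<^sub>v x)))"
    by (rule arg_cong)
  then show ?thesis
    using inv v y by (simp add: scalar_prod_add_distrib[of _ n])
qed

text \<open>The two resolvent identities \<open>G\<^sup>-\<^sup>1 = H\<^sup>-\<^sup>1 + d G\<^sup>-\<^sup>1 M H\<^sup>-\<^sup>1 = H\<^sup>-\<^sup>1 + d H\<^sup>-\<^sup>1 M G\<^sup>-\<^sup>1\<close>
  for \<open>G = gram g\<close> and \<open>H = G + d M\<close>, in scalar form.\<close>

lemma resolvent_identity_left:
  assumes g: "pos_def n (gram g)" and h: "pos_def n (gram (\<lambda>j. g j + d))"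
    and v: "v \<in> carrier_vec n" and y: "y \<in> carrier_vec n"
  defines "x \<equiv> mat_inv (gram (\<lambda>j. g j + d)) *\<^sub>v v"
  shows "y \<bullet> (mat_inv (gram g) *\<^sub>v v) = y \<bullet> x + d * (y \<bullet> (mat_inv (gram g) *\<^sub>v (frame *\<^sub>v x)))"
proof -
  have x: "x \<in> carrier_vec n" unfolding x_def using h v by simp
  have "gram g *\<^sub>v x + d \<cdot>\<^sub>v (frame *\<^sub>v x) = v"
    using gram_cancel_inv[OF h v] gram_shift_mult_vec[OF x] unfolding x_def by simp
  then have "gram g *\<^sub>v x = v + (- d) \<cdot>\<^sub>v (frame *\<^sub>v x)"
    by (auto intro!: eq_vecI simp: x)
  from resolvent_identity[OF g x v y this] show ?thesis by simp
qed

lemma resolvent_identity_right: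
  assumes g: "pos_def n (gram g)" and h: "pos_def n (gram (\<lambda>j. g j + d))"
    and v: "v \<in> carrier_vec n" and y: "y \<in> carrier_vec n"
  defines "q \<equiv> mat_inv (gram g) *\<^sub>v v"
  shows "y \<bullet> q = y \<bullet> (mat_inv (gram (\<lambda>j. g j + d)) *\<^sub>v v)
    + d * (y \<bullet> (mat_inv (gram (\<lambda>j. g j + d)) *\<^sub>v (frame *\<^sub>v q)))"
proof -
  have q: "q \<in> carrier_vec n" unfolding q_def using g v by simp
  have "gram (\<lambda>j. g j + d) *\<^sub>v q = v + d \<cdot>\<^sub>v (frame *\<^sub>v q)"
    using gram_shift_mult_vec[OF q] gram_cancel_inv[OF g v] unfolding q_def by simp
  from resolvent_identity[OF h q v y this] show ?thesis .
qed

lemma sherman_morrison: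
  assumes g: "pos_def n (gram g)" and i: "i \<in> J" and g': "pos_def n (gram (g(i := g i + t)))"
    and v: "v \<in> carrier_vec n" and nz: "1 + t * (b i \<bullet> (mat_inv (gram g) *\<^sub>v b i)) \<noteq> 0"
  defines "z \<equiv> mat_inv (gram g) *\<^sub>v b i"
  shows "mat_inv (gram (g(i := g i + t))) *\<^sub>v v
    = mat_inv (gram g) *\<^sub>v v + (- t / (1 + t * (b i \<bullet> z)) * (z \<bullet> v)) \<cdot>\<^sub>v z"
proof (rule inv_gram_eqI[OF g'])
  let ?c = "- t / (1 + t * (b i \<bullet> z)) * (z \<bullet> v)"
  let ?p = "mat_inv (gram g) *\<^sub>v v"
  have bi: "b i \<in> carrier_vec n" using b_carrier[OF i] .
  have z: "z \<in> carrier_vec n" unfolding z_def using g bi by simp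
  have p: "?p \<in> carrier_vec n" using g v by simp
  show r: "?p + ?c \<cdot>\<^sub>v z \<in> carrier_vec n" using p z by simp
  have bp: "b i \<bullet> ?p = z \<bullet> v"
    unfolding z_def using inv_gram_swap[OF g bi v] comm_scalar_prod[OF v, of "mat_inv (gram g) *\<^sub>v b i"] g bi
    by simp
  have coeff: "?c + t * (z \<bullet> v + ?c * (b i \<bullet> z)) = 0"
    using nz unfolding z_def by (simp add: field_simps)
  have "gram (g(i := g i + t)) *\<^sub>v (?p + ?c \<cdot>\<^sub>v z)
      = gram g *\<^sub>v (?p + ?c \<cdot>\<^sub>v z) + (t * (b i \<bullet> (?p + ?c \<cdot>\<^sub>v z))) \<cdot>\<^sub>v b i"
    using gram_update_mult_vec[OF r i] .
  also have "\<dots> = v + (?c + t * (z \<bullet> v + ?c * (b i \<bullet> z))) \<cdot>\<^sub>v b i"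
    using p z bi bp gram_cancel_inv[OF g v] gram_cancel_inv[OF g bi]
    by (intro eq_vecI) (simp_all add: mult_add_distrib_mat_vec[of _ n n] mult_mat_vec[of _ n n]
        scalar_prod_add_distrib[of _ n] z_def algebra_simps)
  also have "\<dots> = v" using coeff v bi by (intro eq_vecI) auto
  finally show "gram (g(i := g i + t)) *\<^sub>v (?p + ?c \<cdot>\<^sub>v z) = v" .
qed

lemma potential_rank_one_update:
  assumes g: "pos_def n (gram g)" and i: "i \<in> J" and g': "pos_def n (gram (g(i := g i + t)))"
    and nz: "1 + t * (b i \<bullet> (mat_inv (gram g) *\<^sub>v b i)) \<noteq> 0"
  defines "z \<equiv> mat_inv (gram g) *\<^sub>v b i"
  shows "potential (g(i := g i + t)) = potential g - t / (1 + t * (b i \<bullet> z)) * quad_form frame z"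
proof -
  have z: "z \<in> carrier_vec n" unfolding z_def using g b_carrier[OF i] by simp
  have "potential (g(i := g i + t))
      = (\<Sum>j\<in>J. b j \<bullet> (mat_inv (gram g) *\<^sub>v b j) - t / (1 + t * (b i \<bullet> z)) * (b j \<bullet> z)^2)"
    unfolding potential_def
  proof (intro sum.cong refl)
    fix j assume j: "j \<in> J"
    have bj: "b j \<in> carrier_vec n" using b_carrier[OF j] .
    show "b j \<bullet> (mat_inv (gram (g(i := g i + t))) *\<^sub>v b j)
        = b j \<bullet> (mat_inv (gram g) *\<^sub>v b j) - t / (1 + t * (b i \<bullet> z)) * (b j \<bullet> z)^2"
      using sherman_morrison[OF g i g' bj nz] g bj z comm_scalar_prod[OF z bj] unfolding z_def
      by (simp add: scalar_prod_add_distrib[of _ n] power2_eq_square)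
  qed
  also have "\<dots> = potential g - t / (1 + t * (b i \<bullet> z)) * quad_form frame z"
    unfolding potential_def using quad_form_gram[OF z]
    by (simp add: sum_subtractf sum_distrib_left)
  finally show ?thesis .
qed

lemma ex_b_nonzero:
  assumes "n > 0" shows "\<exists>j\<in>J. b j \<noteq> 0\<^sub>v n"
proof -
  have "unit_vec n 0 \<noteq> (0\<^sub>v n :: real vec)"
    using assms by (metis index_unit_vec(1) index_zero_vec(1) zero_neq_one)
  then have "(\<Sum>j\<in>J. (b j \<bullet> unit_vec n 0)^2) > 0" using spanning by simp
  then obtain j where "j \<in> J" "b j \<bullet> unit_vec n 0 \<noteq> 0"
    by (metis (no_types, lifting) power_zero_numeral sum.neutral less_irrefl)
  then show ?thesis using b_carrier by (metis scalar_prod_left_zero unit_vec_carrier)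
qed

lemma sum_quad_form_frame_inv_pos:
  assumes "n > 0" and g: "pos_def n (gram g)"
  shows "(\<Sum>j\<in>J. quad_form frame (mat_inv (gram g) *\<^sub>v b j)) > 0"
proof -
  obtain j where j: "j \<in> J" "b j \<noteq> 0\<^sub>v n" using ex_b_nonzero[OF assms(1)] by blast
  let ?z = "mat_inv (gram g) *\<^sub>v b j"
  have z: "?z \<in> carrier_vec n" using g b_carrier[OF j(1)] by simp
  have "gram g *\<^sub>v 0\<^sub>v n = 0\<^sub>v n" by (intro eq_vecI) auto
  then have "?z \<noteq> 0\<^sub>v n"
    using gram_cancel_inv[OF g b_carrier[OF j(1)]] j(2) by auto
  then have "quad_form frame ?z > 0" using frame_pos_def z unfolding pos_def_def by blast
  then show ?thesis
    using finite_J j(1) quad_form_frame_nonneg g b_carrier by (intro sum_pos2[of J j]) auto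
qed

text \<open>The potential bounds the largest eigenvalue of \<open>M\<close> relative to \<open>gram h\<close>, by two
  applications of Cauchy-Schwarz.\<close>

lemma frame_inv_gram_frame_le:
  assumes h: "pos_def n (gram h)" and x: "x \<in> carrier_vec n"
  shows "(frame *\<^sub>v x) \<bullet> (mat_inv (gram h) *\<^sub>v (frame *\<^sub>v x)) \<le> potential h * quad_form frame x"
proof -
  let ?H = "mat_inv (gram h)"
  define m where "m = frame *\<^sub>v x"
  define p where "p = ?H *\<^sub>v m"
  define Q where "Q = m \<bullet> p"
  have m: "m \<in> carrier_vec n" unfolding m_def by simp
  have p: "p \<in> carrier_vec n" unfolding p_def using h m by simp
  have Q0: "Q \<ge> 0" unfolding Q_def p_def using inv_gram_nonneg[OF h m] .
  have "Q = p \<bullet> m" unfolding Q_def using comm_scalar_prod[OF m p] .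
  then have Q_sum: "Q = (\<Sum>j\<in>J. (b j \<bullet> x) * (b j \<bullet> p))"
    unfolding m_def using scalar_prod_gram[OF x p] by simp
  have summand: "((b j \<bullet> x) * (b j \<bullet> p))^2 \<le> (b j \<bullet> x)^2 * ((b j \<bullet> (?H *\<^sub>v b j)) * Q)"
    if j: "j \<in> J" for j
  proof -
    have "(b j \<bullet> p)^2 \<le> quad_form ?H (b j) * quad_form ?H m"
      unfolding p_def by (rule pos_semidef_cauchy_schwarz[OF inv_gram_pos_semidef[OF h] b_carrier[OF j] m])
    then have "(b j \<bullet> p)^2 \<le> (b j \<bullet> (?H *\<^sub>v b j)) * Q"
      unfolding quad_form_def Q_def p_def .
    then show ?thesis by (simp add: power_mult_distrib mult_left_mono)
  qed
  have "(\<Sum>j\<in>J. (b j \<bullet> x) * (b j \<bullet> p))^2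
      \<le> (\<Sum>j\<in>J. (b j \<bullet> x)^2) * (\<Sum>j\<in>J. (b j \<bullet> (?H *\<^sub>v b j)) * Q)"
    by (rule sum_cauchy_schwarz[OF finite_J]) (use summand Q0 inv_gram_nonneg[OF h] b_carrier in auto)
  then have "Q^2 \<le> (\<Sum>j\<in>J. (b j \<bullet> x)^2) * (\<Sum>j\<in>J. (b j \<bullet> (?H *\<^sub>v b j)) * Q)"
    unfolding Q_sum[symmetric] .
  also have "\<dots> = quad_form frame x * (potential h * Q)"
    using quad_form_gram[OF x] unfolding potential_def by (simp add: sum_distrib_right)
  finally have "Q * Q \<le> Q * (quad_form frame x * potential h)"
    by (simp add: power2_eq_square algebra_simps)
  then have "Q \<le> quad_form frame x * potential h"
    using Q0 quad_form_frame_nonneg[OF x] potential_nonneg[OF h]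
    by (cases "Q = 0") (simp_all add: mult_le_cancel_left_pos)
  then show ?thesis unfolding Q_def p_def m_def by (simp add: mult.commute)
qed

lemma frame_le_potential_gram:
  assumes h: "pos_def n (gram h)" and x: "x \<in> carrier_vec n"
  shows "quad_form frame x \<le> potential h * quad_form (gram h) x"
proof -
  define p where "p = mat_inv (gram h) *\<^sub>v (frame *\<^sub>v x)"
  have p: "p \<in> carrier_vec n" unfolding p_def using h by simp
  have hp: "gram h *\<^sub>v p = frame *\<^sub>v x" unfolding p_def using gram_cancel_inv[OF h] by simp
  have Yx: "quad_form (gram h) x \<ge> 0"
    using pos_def_imp_pos_semidef[OF h] x unfolding pos_semidef_def by blast
  have "quad_form (gram h) p = (frame *\<^sub>v x) \<bullet> p"
    unfolding quad_form_def hp using comm_scalar_prod[OF _ p, of "frame *\<^sub>v x"] by simp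
  also have "\<dots> \<le> potential h * quad_form frame x"
    unfolding p_def by (rule frame_inv_gram_frame_le[OF h x])
  finally have Yp: "quad_form (gram h) p \<le> potential h * quad_form frame x" .
  have "(quad_form frame x)^2 = (x \<bullet> (gram h *\<^sub>v p))^2" unfolding hp quad_form_def ..
  also have "\<dots> \<le> quad_form (gram h) x * quad_form (gram h) p"
    by (rule pos_semidef_cauchy_schwarz[OF pos_def_imp_pos_semidef[OF h] x p])
  also have "\<dots> \<le> quad_form (gram h) x * (potential h * quad_form frame x)"
    using Yp Yx by (rule mult_left_mono)
  finally have "quad_form frame x * quad_form frame x
      \<le> quad_form frame x * (potential h * quad_form (gram h) x)"
    by (simp add: power2_eq_square algebra_simps)
  then show ?thesis
    using quad_form_frame_nonneg[OF x] pos_def_imp_pos_semidef[OF h] potential_nonneg[OF h] x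
    unfolding pos_semidef_def
    by (cases "quad_form frame x = 0") (simp_all add: mult_le_cancel_left_pos)
qed

lemma pos_def_gram_shift:
  assumes "pos_def n (gram g)" "d \<ge> 0"
  shows "pos_def n (gram (\<lambda>j. g j + d))"
  using assms quad_form_frame_nonneg
  unfolding pos_def_gram_iff by (simp add: quad_form_gram_shift add_pos_nonneg)

lemma pos_def_gram_unshift:
  assumes h: "pos_def n (gram (\<lambda>j. g j + d))" and d: "d \<ge> 0"
    and small: "d * potential (\<lambda>j. g j + d) < 1"
  shows "pos_def n (gram g)"
  unfolding pos_def_gram_iff
proof (intro ballI impI)
  fix x :: "real vec" assume x: "x \<in> carrier_vec n" and x0: "x \<noteq> 0\<^sub>v n"
  let ?Y = "quad_form (gram (\<lambda>j. g j + d)) x"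
  have Y: "?Y > 0" using h x x0 unfolding pos_def_gram_iff by blast
  have "d * quad_form frame x \<le> (d * potential (\<lambda>j. g j + d)) * ?Y"
    using mult_left_mono[OF frame_le_potential_gram[OF h x] d] by (simp add: mult.assoc)
  also have "\<dots> < ?Y" using small Y by simp
  finally show "quad_form (gram g) x > 0" using quad_form_gram_shift[OF x, of g d] by simp
qed

lemma inv_gram_shift_terms:
  assumes g: "pos_def n (gram g)" and h: "pos_def n (gram (\<lambda>j. g j + d))" and d: "d \<ge> 0"
    and v: "v \<in> carrier_vec n"
  defines "x \<equiv> mat_inv (gram g) *\<^sub>v v" and "y \<equiv> mat_inv (gram (\<lambda>j. g j + d)) *\<^sub>v v"
  defines "a \<equiv> (frame *\<^sub>v y) \<bullet> x"
    and "e \<equiv> (frame *\<^sub>v x) \<bullet> (mat_inv (gram (\<lambda>j. g j + d)) *\<^sub>v (frame *\<^sub>v x))"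
  shows "v \<bullet> x = v \<bullet> y + d * a" and "quad_form frame y \<le> a"
    and "quad_form frame x = a + d * e" and "e \<ge> 0" and "a^2 \<le> e * (v \<bullet> y)"
proof -
  let ?G = "mat_inv (gram g)" and ?H = "mat_inv (gram (\<lambda>j. g j + d))"
  have x: "x \<in> carrier_vec n" unfolding x_def using g v by simp
  have y: "y \<in> carrier_vec n" unfolding y_def using h v by simp
  have My: "frame *\<^sub>v y \<in> carrier_vec n" and Mx: "frame *\<^sub>v x \<in> carrier_vec n" by simp_all
  have a_swap: "a = (frame *\<^sub>v x) \<bullet> y"
    using gram_swap[OF y x] comm_scalar_prod[OF Mx y] comm_scalar_prod[OF x My] unfolding a_def
    by simp
  have "v \<bullet> x = v \<bullet> y + d * (v \<bullet> (?G *\<^sub>v (frame *\<^sub>v y)))"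
    unfolding x_def y_def by (rule resolvent_identity_left[OF g h v v])
  then show "v \<bullet> x = v \<bullet> y + d * a"
    unfolding a_def x_def using inv_gram_swap[OF g v My] by simp
  have "a = (frame *\<^sub>v y) \<bullet> y + d * ((frame *\<^sub>v y) \<bullet> (?G *\<^sub>v (frame *\<^sub>v y)))"
    unfolding a_def x_def y_def by (rule resolvent_identity_left[OF g h v My[unfolded y_def]])
  then show "quad_form frame y \<le> a"
    using inv_gram_nonneg[OF g My] comm_scalar_prod[OF My y] d unfolding quad_form_def by simp
  have "(frame *\<^sub>v x) \<bullet> x = (frame *\<^sub>v x) \<bullet> y + d * e"
    unfolding x_def y_def e_def by (rule resolvent_identity_right[OF g h v Mx[unfolded x_def]])
  then show "quad_form frame x = a + d * e"
    using a_swap comm_scalar_prod[OF x Mx] unfolding quad_form_def by simp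
  show "e \<ge> 0" unfolding e_def using inv_gram_nonneg[OF h Mx] .
  have "((frame *\<^sub>v x) \<bullet> (?H *\<^sub>v v))^2 \<le> quad_form ?H (frame *\<^sub>v x) * quad_form ?H v"
    by (rule pos_semidef_cauchy_schwarz[OF inv_gram_pos_semidef[OF h] Mx v])
  then show "a^2 \<le> e * (v \<bullet> y)" unfolding a_swap quad_form_def e_def y_def .
qed

lemma upper_shift_sum_bound:
  assumes n: "n > 0" and g: "pos_def n (gram g)" and d: "d > 0"
  defines "\<Delta> \<equiv> potential g - potential (\<lambda>j. g j + d)"
    and "z \<equiv> \<lambda>j. mat_inv (gram (\<lambda>j. g j + d)) *\<^sub>v b j"
  shows "\<Delta> > 0" and "(\<Sum>j\<in>J. quad_form frame (z j) / \<Delta> + b j \<bullet> z j) \<le> 1 / d + potential (\<lambda>j. g j + d)"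
proof -
  have h: "pos_def n (gram (\<lambda>j. g j + d))" using pos_def_gram_shift[OF g] d by simp
  note terms = inv_gram_shift_terms[OF g h less_imp_le[OF d] b_carrier]
  have "\<Delta> = (\<Sum>j\<in>J. b j \<bullet> (mat_inv (gram g) *\<^sub>v b j) - b j \<bullet> z j)"
    unfolding \<Delta>_def potential_def z_def by (simp add: sum_subtractf)
  also have "\<dots> \<ge> (\<Sum>j\<in>J. d * quad_form frame (z j))"
    unfolding z_def using terms(1,2) d by (intro sum_mono) (simp add: mult_left_mono)
  finally have \<Delta>_ge: "\<Delta> \<ge> d * (\<Sum>j\<in>J. quad_form frame (z j))" by (simp add: sum_distrib_left)
  moreover have "(\<Sum>j\<in>J. quad_form frame (z j)) > 0"
    unfolding z_def by (rule sum_quad_form_frame_inv_pos[OF n h])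
  ultimately show \<Delta>: "\<Delta> > 0" using d by (meson mult_pos_pos order_less_le_trans)
  have "(\<Sum>j\<in>J. quad_form frame (z j) / \<Delta> + b j \<bullet> z j)
      = (\<Sum>j\<in>J. quad_form frame (z j)) / \<Delta> + potential (\<lambda>j. g j + d)"
    unfolding potential_def z_def by (simp add: sum.distrib sum_divide_distrib)
  also have "(\<Sum>j\<in>J. quad_form frame (z j)) / \<Delta> \<le> 1 / d"
    using \<Delta>_ge \<Delta> d by (simp add: field_simps)
  finally show "(\<Sum>j\<in>J. quad_form frame (z j) / \<Delta> + b j \<bullet> z j) \<le> 1 / d + potential (\<lambda>j. g j + d)"
    by simp
qed

lemma lower_shift_sum_bound:
  assumes n: "n > 0" and g: "pos_def n (gram g)" and h: "pos_def n (gram (\<lambda>j. g j + d))"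
    and d: "d > 0" and small: "d * potential (\<lambda>j. g j + d) \<le> 1"
  defines "\<Delta> \<equiv> potential g - potential (\<lambda>j. g j + d)"
    and "x \<equiv> \<lambda>j. mat_inv (gram g) *\<^sub>v b j"
  shows "\<Delta> > 0" and "(\<Sum>j\<in>J. quad_form frame (x j) / \<Delta> - b j \<bullet> x j) \<ge> 1 / d - potential (\<lambda>j. g j + d)"
proof -
  let ?P = "potential (\<lambda>j. g j + d)" and ?H = "mat_inv (gram (\<lambda>j. g j + d))"
  define a where "a j = (frame *\<^sub>v (?H *\<^sub>v b j)) \<bullet> x j" for j
  define e where "e j = (frame *\<^sub>v x j) \<bullet> (?H *\<^sub>v (frame *\<^sub>v x j))" for j
  note terms = inv_gram_shift_terms[OF g h less_imp_le[OF d] b_carrier]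
  define A where "A = (\<Sum>j\<in>J. a j)"
  define E where "E = (\<Sum>j\<in>J. e j)"
  have P: "?P = (\<Sum>j\<in>J. b j \<bullet> (?H *\<^sub>v b j))" unfolding potential_def ..
  have "\<Delta> = (\<Sum>j\<in>J. b j \<bullet> x j - b j \<bullet> (?H *\<^sub>v b j))"
    unfolding \<Delta>_def potential_def x_def by (simp add: sum_subtractf)
  also have "\<dots> = (\<Sum>j\<in>J. d * a j)"
    using terms(1) by (intro sum.cong) (simp_all add: a_def x_def)
  finally have \<Delta>_eq: "\<Delta> = d * A" by (simp add: A_def sum_distrib_left)
  have "A \<ge> (\<Sum>j\<in>J. quad_form frame (?H *\<^sub>v b j))"
    unfolding A_def using terms(2) by (intro sum_mono) (simp add: a_def x_def)
  moreover have "(\<Sum>j\<in>J. quad_form frame (?H *\<^sub>v b j)) > 0" by (rule sum_quad_form_frame_inv_pos[OF n h])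
  ultimately have A: "A > 0" by simp
  then show "\<Delta> > 0" using \<Delta>_eq d by simp
  have E: "E \<ge> 0" unfolding E_def using terms(4) by (simp add: e_def x_def sum_nonneg)
  have "A^2 \<le> E * ?P"
    unfolding A_def E_def P
    by (rule sum_cauchy_schwarz[OF finite_J]) (use terms(4,5) inv_gram_nonneg[OF h] b_carrier in \<open>auto simp: a_def e_def x_def\<close>)
  then have CS: "A^2 \<le> ?P * E" by (simp add: mult.commute)
  have "(\<Sum>j\<in>J. quad_form frame (x j)) = A + d * E"
    unfolding A_def E_def using terms(3)
    by (simp add: a_def e_def x_def sum.distrib sum_distrib_left)
  moreover have "potential g = ?P + \<Delta>" unfolding \<Delta>_def by simp
  ultimately have "(\<Sum>j\<in>J. quad_form frame (x j) / \<Delta> - b j \<bullet> x j) = (A + d * E) / (d * A) - (?P + d * A)"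
    using \<Delta>_eq unfolding potential_def x_def by (simp add: sum_subtractf sum_divide_distrib[symmetric])
  also have "\<dots> \<ge> 1 / d - ?P" by (rule lower_shift_arith[OF A d E CS small potential_nonneg[OF h]])
  finally show "(\<Sum>j\<in>J. quad_form frame (x j) / \<Delta> - b j \<bullet> x j) \<ge> 1 / d - ?P" .
qed

lemma rank_one_le_gram:
  assumes g: "pos_def n (gram g)" and i: "i \<in> J" and v: "v \<in> carrier_vec n"
  shows "(b i \<bullet> v)^2 \<le> (b i \<bullet> (mat_inv (gram g) *\<^sub>v b i)) * quad_form (gram g) v"
proof -
  let ?z = "mat_inv (gram g) *\<^sub>v b i"
  have bi: "b i \<in> carrier_vec n" using b_carrier[OF i] .
  have z: "?z \<in> carrier_vec n" using g bi by simp
  have gz: "gram g *\<^sub>v ?z = b i" using gram_cancel_inv[OF g bi] .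
  have "(?z \<bullet> (gram g *\<^sub>v v))^2 \<le> quad_form (gram g) ?z * quad_form (gram g) v"
    by (rule pos_semidef_cauchy_schwarz[OF pos_def_imp_pos_semidef[OF g] z v])
  moreover have "?z \<bullet> (gram g *\<^sub>v v) = b i \<bullet> v"
    using gram_swap[OF z v] gz comm_scalar_prod[OF v bi] by simp
  moreover have "quad_form (gram g) ?z = b i \<bullet> ?z"
    unfolding quad_form_def gz using comm_scalar_prod[OF z bi] by simp
  ultimately show ?thesis by simp
qed

lemma upper_rank_one_update:
  assumes g: "pos_def n (gram g)" and i: "i \<in> J" and t: "t > 0" and \<Delta>: "\<Delta> > 0"
  defines "z \<equiv> mat_inv (gram g) *\<^sub>v b i"
  assumes room: "quad_form frame z / \<Delta> + b i \<bullet> z < 1 / t"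
  shows "pos_def n (gram (g(i := g i - t)))" and "potential (g(i := g i - t)) \<le> potential g + \<Delta>"
proof -
  let ?\<beta> = "b i \<bullet> z" and ?\<gamma> = "quad_form frame z"
  have bi: "b i \<in> carrier_vec n" using b_carrier[OF i] .
  have \<gamma>: "?\<gamma> \<ge> 0" using quad_form_frame_nonneg g bi unfolding z_def by simp
  have "?\<gamma> / \<Delta> < 1 / t - ?\<beta>" using room by linarith
  then have "?\<gamma> < (1 / t - ?\<beta>) * \<Delta>" using pos_divide_less_eq[OF \<Delta>] by blast
  then have le: "t * ?\<gamma> < (1 - t * ?\<beta>) * \<Delta>" using t by (simp add: field_simps)
  moreover have "0 \<le> t * ?\<gamma>" using t \<gamma> by simp
  ultimately have "0 < (1 - t * ?\<beta>) * \<Delta>" by linarith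
  then have t\<beta>: "t * ?\<beta> < 1" using \<Delta> by (simp add: zero_less_mult_iff)
  show pos: "pos_def n (gram (g(i := g i - t)))"
    unfolding pos_def_gram_iff
  proof (intro ballI impI)
    fix v :: "real vec" assume v: "v \<in> carrier_vec n" "v \<noteq> 0\<^sub>v n"
    have gv: "quad_form (gram g) v > 0" using g v unfolding pos_def_gram_iff by blast
    have "t * (b i \<bullet> v)^2 \<le> (t * ?\<beta>) * quad_form (gram g) v"
      using mult_left_mono[OF rank_one_le_gram[OF g i v(1)], of t] t unfolding z_def by simp
    also have "\<dots> < quad_form (gram g) v" using t\<beta> gv by simp
    finally show "quad_form (gram (g(i := g i - t))) v > 0"
      using quad_form_gram_update[OF v(1) i, of g "- t"] by simp
  qed
  have pos': "pos_def n (gram (g(i := g i + - t)))" using pos by simp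
  have "1 + - t * ?\<beta> \<noteq> 0" using t\<beta> by simp
  then have "potential (g(i := g i - t)) = potential g + t / (1 - t * ?\<beta>) * ?\<gamma>"
    using potential_rank_one_update[OF g i pos'] unfolding z_def by simp
  also have "t / (1 - t * ?\<beta>) * ?\<gamma> \<le> \<Delta>"
    using le t\<beta> by (simp add: pos_divide_le_eq mult.commute)
  finally show "potential (g(i := g i - t)) \<le> potential g + \<Delta>" by simp
qed

lemma lower_rank_one_update:
  assumes g: "pos_def n (gram g)" and i: "i \<in> J" and t: "t > 0" and \<Delta>: "\<Delta> > 0"
  defines "x \<equiv> mat_inv (gram g) *\<^sub>v b i"
  assumes room: "1 / t \<le> quad_form frame x / \<Delta> - b i \<bullet> x"
  shows "pos_def n (gram (g(i := g i + t)))" and "potential (g(i := g i + t)) \<le> potential g - \<Delta>"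
proof -
  let ?\<beta> = "b i \<bullet> x" and ?\<gamma> = "quad_form frame x"
  have \<beta>: "?\<beta> \<ge> 0" using inv_gram_nonneg[OF g b_carrier[OF i]] unfolding x_def .
  show pos: "pos_def n (gram (g(i := g i + t)))"
    using g t unfolding pos_def_gram_iff by (simp add: quad_form_gram_update[OF _ i] add_pos_nonneg)
  have "1 + t * ?\<beta> > 0" using \<beta> t by (simp add: add_pos_nonneg)
  then have "1 + t * ?\<beta> \<noteq> 0" by simp
  then have eq: "potential (g(i := g i + t)) = potential g - t / (1 + t * ?\<beta>) * ?\<gamma>"
    using potential_rank_one_update[OF g i pos] unfolding x_def by simp
  have "t / (1 + t * ?\<beta>) * ?\<gamma> \<ge> \<Delta>"
  proof -
    have "1 / t + ?\<beta> \<le> ?\<gamma> / \<Delta>" using room by linarith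
    then have "(1 / t + ?\<beta>) * \<Delta> \<le> ?\<gamma>" using pos_le_divide_eq[OF \<Delta>] by blast
    then have "(1 + t * ?\<beta>) * \<Delta> \<le> t * ?\<gamma>" using t by (simp add: field_simps)
    then show ?thesis using t \<beta> by (simp add: pos_le_divide_eq add_pos_nonneg mult.commute)
  qed
  with eq show "potential (g(i := g i + t)) \<le> potential g - \<Delta>" by simp
qed

definition upper_barrier :: "real \<Rightarrow> ('j \<Rightarrow> real) \<Rightarrow> real \<Rightarrow> bool" where
  "upper_barrier u s \<epsilon> \<longleftrightarrow> pos_def n (gram (\<lambda>j. u - s j)) \<and> potential (\<lambda>j. u - s j) \<le> \<epsilon>"

definition lower_barrier :: "real \<Rightarrow> ('j \<Rightarrow> real) \<Rightarrow> real \<Rightarrow> bool" where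
  "lower_barrier l s \<epsilon> \<longleftrightarrow> pos_def n (gram (\<lambda>j. s j - l)) \<and> potential (\<lambda>j. s j - l) \<le> \<epsilon>"

text \<open>A suitable index exists because, summed over \<open>J\<close>, the admissible range for \<open>1/t\<close>
  imposed by the lower barrier exceeds the one imposed by the upper barrier.\<close>

lemma barrier_step:
  assumes n: "n > 0" and up: "upper_barrier u s \<epsilon>U" and low: "lower_barrier l s \<epsilon>L"
    and dU: "dU > 0" and dL: "dL > 0" and small: "dL * \<epsilon>L < 1"
    and gap: "1 / dU + \<epsilon>U < 1 / dL - \<epsilon>L"
  obtains i t where "i \<in> J" "t > 0"
    "upper_barrier (u + dU) (s(i := s i + t)) \<epsilon>U" "lower_barrier (l + dL) (s(i := s i + t)) \<epsilon>L"
proof -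
  define gW where "gW = (\<lambda>j. u - s j)"
  define gX where "gX = (\<lambda>j. s j - (l + dL))"
  have W: "pos_def n (gram gW)" "potential gW \<le> \<epsilon>U"
    using up unfolding upper_barrier_def gW_def by auto
  have "(\<lambda>j. gX j + dL) = (\<lambda>j. s j - l)" unfolding gX_def by auto
  then have Y: "pos_def n (gram (\<lambda>j. gX j + dL))" "potential (\<lambda>j. gX j + dL) \<le> \<epsilon>L"
    using low unfolding lower_barrier_def by auto
  have "dL * potential (\<lambda>j. gX j + dL) \<le> dL * \<epsilon>L" using Y(2) dL by simp
  then have small': "dL * potential (\<lambda>j. gX j + dL) < 1" using small by simp
  have X: "pos_def n (gram gX)" using pos_def_gram_unshift[OF Y(1) _ small'] dL by simp
  have Z: "pos_def n (gram (\<lambda>j. gW j + dU))" using pos_def_gram_shift[OF W(1)] dU by simp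
  define z where "z j = mat_inv (gram (\<lambda>j. gW j + dU)) *\<^sub>v b j" for j
  define x where "x j = mat_inv (gram gX) *\<^sub>v b j" for j
  define \<Delta>U where "\<Delta>U = potential gW - potential (\<lambda>j. gW j + dU)"
  define \<Delta>L where "\<Delta>L = potential gX - potential (\<lambda>j. gX j + dL)"
  define U where "U j = quad_form frame (z j) / \<Delta>U + b j \<bullet> z j" for j
  define L where "L j = quad_form frame (x j) / \<Delta>L - b j \<bullet> x j" for j
  note upper = upper_shift_sum_bound[OF n W(1) dU, folded \<Delta>U_def z_def, folded U_def]
  note lower = lower_shift_sum_bound[OF n X Y(1) dL less_imp_le[OF small'], folded \<Delta>L_def x_def, folded L_def]
  have "(\<Sum>j\<in>J. U j) \<le> 1 / dU + \<epsilon>U" using upper W(2) unfolding \<Delta>U_def by linarith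
  moreover have "(\<Sum>j\<in>J. L j) \<ge> 1 / dL - \<epsilon>L" using lower(2) Y(2) by linarith
  ultimately have "(\<Sum>j\<in>J. L j - U j) > 0" using gap by (simp add: sum_subtractf)
  then obtain i where i: "i \<in> J" and UL: "U i < L i"
    by (metis (no_types, lifting) diff_gt_0_iff_gt linorder_not_le sum_nonpos)
  have "U i \<ge> 0"
    using inv_gram_nonneg[OF Z b_carrier[OF i]] quad_form_frame_nonneg upper(1) Z b_carrier[OF i]
    unfolding U_def z_def by simp
  then have t: "1 / L i > 0" using UL by simp
  have room: "U i < 1 / (1 / L i)" "1 / (1 / L i) \<le> L i" using UL by simp_all
  note up' = upper_rank_one_update[OF Z i t upper(1), folded z_def, folded U_def, OF room(1)]
  note low' = lower_rank_one_update[OF X i t lower(1), folded x_def, folded L_def, OF room(2)]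
  have "(\<lambda>j. u + dU - (s(i := s i + 1 / L i)) j) = (\<lambda>j. gW j + dU)(i := gW i + dU - 1 / L i)"
    "(\<lambda>j. (s(i := s i + 1 / L i)) j - (l + dL)) = gX(i := gX i + 1 / L i)"
    unfolding gW_def gX_def by auto
  then have "upper_barrier (u + dU) (s(i := s i + 1 / L i)) \<epsilon>U"
    "lower_barrier (l + dL) (s(i := s i + 1 / L i)) \<epsilon>L"
    unfolding upper_barrier_def lower_barrier_def
    using up' low' W(2) Y(2) unfolding \<Delta>U_def \<Delta>L_def by auto
  with i t that show ?thesis by blast
qed

lemma gram_const_mult_vec: "x \<in> carrier_vec n \<Longrightarrow> gram (\<lambda>_. c) *\<^sub>v x = c \<cdot>\<^sub>v (frame *\<^sub>v x)"
  by (intro eq_vecI) (auto simp: gram_mult_vec sum_distrib_left algebra_simps)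

lemma pos_def_gram_const: "c > 0 \<Longrightarrow> pos_def n (gram (\<lambda>_. c))"
  using frame_pos_def unfolding pos_def_gram_iff by (simp add: quad_form_gram sum_distrib_left[symmetric])

lemma potential_const:
  assumes c: "c > 0" shows "potential (\<lambda>_. c) = real n / c"
proof -
  note inv = pos_def_mat_inv[OF frame_pos_def]
  have inv_c: "mat_inv (gram (\<lambda>_. c)) *\<^sub>v v = (1 / c) \<cdot>\<^sub>v (mat_inv frame *\<^sub>v v)"
    if v: "v \<in> carrier_vec n" for v
  proof (rule inv_gram_eqI[OF pos_def_gram_const[OF c]])
    have w: "mat_inv frame *\<^sub>v v \<in> carrier_vec n" using inv(1) v by simp
    then show "(1 / c) \<cdot>\<^sub>v (mat_inv frame *\<^sub>v v) \<in> carrier_vec n" by simp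
    have "gram (\<lambda>_. c) *\<^sub>v ((1 / c) \<cdot>\<^sub>v (mat_inv frame *\<^sub>v v))
        = c \<cdot>\<^sub>v ((1 / c) \<cdot>\<^sub>v (frame *\<^sub>v (mat_inv frame *\<^sub>v v)))"
      using gram_const_mult_vec[of "(1 / c) \<cdot>\<^sub>v (mat_inv frame *\<^sub>v v)" c] w
        mult_mat_vec[OF gram_carrier w, of _ "1 / c"]
      by simp
    also have "\<dots> = v"
      using c gram_cancel_inv[OF frame_pos_def v] by (simp add: smult_smult_assoc)
    finally show "gram (\<lambda>_. c) *\<^sub>v ((1 / c) \<cdot>\<^sub>v (mat_inv frame *\<^sub>v v)) = v" .
  qed
  have "potential (\<lambda>_. c) = (\<Sum>j\<in>J. (1 / c) * (1 * (b j \<bullet> (mat_inv frame *\<^sub>v b j))))"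
    unfolding potential_def
    using inv(1) b_carrier by (intro sum.cong refl) (simp add: inv_c)
  also have "\<dots> = (1 / c) * mat_trace (mat_inv frame * frame)"
    using mat_trace_mult_gram[OF inv(1)] by (simp add: sum_distrib_left)
  finally show ?thesis using inv(3) mat_trace_one by simp
qed

lemma barrier_iterate:
  assumes n: "n > 0" and dU: "dU > 0" and dL: "dL > 0" and small: "dL * \<epsilon>L < 1"
    and gap: "1 / dU + \<epsilon>U < 1 / dL - \<epsilon>L" and \<epsilon>U: "\<epsilon>U > 0" and \<epsilon>L: "\<epsilon>L > 0"
  shows "\<exists>s. (\<forall>j. s j \<ge> 0) \<and> card {j\<in>J. s j \<noteq> 0} \<le> k \<and>
    upper_barrier (n / \<epsilon>U + k * dU) s \<epsilon>U \<and> lower_barrier (k * dL - n / \<epsilon>L) s \<epsilon>L"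
proof (induction k)
  case 0
  have "n / \<epsilon>U > 0" "n / \<epsilon>L > 0" using n \<epsilon>U \<epsilon>L by simp_all
  then have "upper_barrier (n / \<epsilon>U) (\<lambda>_. 0) \<epsilon>U" "lower_barrier (- n / \<epsilon>L) (\<lambda>_. 0) \<epsilon>L"
    using pos_def_gram_const potential_const n \<epsilon>U \<epsilon>L
    unfolding upper_barrier_def lower_barrier_def by simp_all
  then show ?case by (intro exI[of _ "\<lambda>_. 0"]) simp
next
  case (Suc k)
  then obtain s where s: "\<forall>j. s j \<ge> 0" "card {j\<in>J. s j \<noteq> 0} \<le> k"
    "upper_barrier (n / \<epsilon>U + k * dU) s \<epsilon>U" "lower_barrier (k * dL - n / \<epsilon>L) s \<epsilon>L"
    by blast
  obtain i t where i: "i \<in> J" and t: "t > 0"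
    and up: "upper_barrier (n / \<epsilon>U + k * dU + dU) (s(i := s i + t)) \<epsilon>U"
    and low: "lower_barrier (k * dL - n / \<epsilon>L + dL) (s(i := s i + t)) \<epsilon>L"
    using barrier_step[OF n s(3,4) dU dL small gap] .
  have "card {j\<in>J. (s(i := s i + t)) j \<noteq> 0} \<le> card (insert i {j\<in>J. s j \<noteq> 0})"
    using finite_J by (intro card_mono) auto
  also have "\<dots> \<le> Suc k" using s(2) finite_J by (simp add: card_insert_if)
  finally have card: "card {j\<in>J. (s(i := s i + t)) j \<noteq> 0} \<le> Suc k" .
  have nonneg: "\<forall>j. (s(i := s i + t)) j \<ge> 0" using s(1) t by (simp add: add_nonneg_nonneg)
  have shift: "n / \<epsilon>U + k * dU + dU = n / \<epsilon>U + Suc k * dU"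
    "k * dL - n / \<epsilon>L + dL = Suc k * dL - n / \<epsilon>L" by (simp_all add: algebra_simps)
  show ?case using nonneg card up low unfolding shift by blast
qed

lemma upper_barrier_quad_form_le:
  "upper_barrier u s \<epsilon> \<Longrightarrow> x \<in> carrier_vec n \<Longrightarrow> quad_form (gram s) x \<le> u * quad_form frame x"
  using pos_def_imp_pos_semidef unfolding upper_barrier_def pos_semidef_def
  by (fastforce simp: quad_form_gram algebra_simps sum_subtractf sum_distrib_left)

lemma lower_barrier_quad_form_ge:
  "lower_barrier l s \<epsilon> \<Longrightarrow> x \<in> carrier_vec n \<Longrightarrow> l * quad_form frame x \<le> quad_form (gram s) x"
  using pos_def_imp_pos_semidef unfolding lower_barrier_def pos_semidef_def
  by (fastforce simp: quad_form_gram algebra_simps sum_subtractf sum_distrib_left)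

lemma quad_form_gram_scale: "x \<in> carrier_vec n \<Longrightarrow> quad_form (gram (\<lambda>j. c * s j)) x = c * quad_form (gram s) x"
  by (simp add: quad_form_gram sum_distrib_left mult.assoc)

lemma barrier_sandwich:
  assumes n: "n > 0" and \<epsilon>: "0 < \<epsilon>" "\<epsilon> < 1" and q: "real q \<ge> 18 * real n / \<epsilon>^2"
  obtains s u l where "\<forall>j. s j \<ge> 0" "card {j\<in>J. s j \<noteq> 0} \<le> q" "u > 0" "(1 - \<epsilon>) * u \<le> (1 + \<epsilon>) * l"
    "\<And>x. x \<in> carrier_vec n \<Longrightarrow> l * quad_form frame x \<le> quad_form (gram s) x"
    "\<And>x. x \<in> carrier_vec n \<Longrightarrow> quad_form (gram s) x \<le> u * quad_form frame x"
proof -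
  define \<gamma> where "\<gamma> = \<epsilon> / 10"
  have \<gamma>: "0 < \<gamma>" "\<gamma> < 1 / 10" using \<epsilon> unfolding \<gamma>_def by auto
  have "1 < (1 - 3 * \<gamma> / 2) * (1 + 3 * \<gamma>)" using \<gamma> by (simp add: algebra_simps power2_eq_square)
  then have gap: "1 / (1 + 3 * \<gamma>) + \<gamma> / 2 < 1 / 1 - \<gamma>" using \<gamma> by (simp add: field_simps)
  obtain s where s: "\<forall>j. s j \<ge> 0" "card {j\<in>J. s j \<noteq> 0} \<le> q"
    and up: "upper_barrier (n / (\<gamma> / 2) + q * (1 + 3 * \<gamma>)) s (\<gamma> / 2)"
    and low: "lower_barrier (q * 1 - n / \<gamma>) s \<gamma>"
    using barrier_iterate[of "1 + 3 * \<gamma>" 1 \<gamma> "\<gamma> / 2" q] n \<gamma> gap by auto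
  define u where "u = 20 * real n / \<epsilon> + q * (1 + 3 * \<epsilon> / 10)"
  define l where "l = q - 10 * real n / \<epsilon>"
  have "n / (\<gamma> / 2) + q * (1 + 3 * \<gamma>) = u" "q * 1 - n / \<gamma> = l"
    unfolding u_def l_def \<gamma>_def by simp_all
  moreover have "u > 0" unfolding u_def using n \<epsilon> by (simp add: add_pos_nonneg)
  moreover have "(1 - \<epsilon>) * u \<le> (1 + \<epsilon>) * l"
    unfolding u_def l_def by (rule sparsification_parameters_arith[OF \<epsilon> _ q]) simp
  ultimately show thesis
    using that[OF s] up low upper_barrier_quad_form_le lower_barrier_quad_form_ge by simp
qed

theorem spectral_sparsification:
  assumes n: "n > 0" and \<epsilon>: "0 < \<epsilon>" "\<epsilon> < 1"
  obtains s where "\<forall>j. s j \<ge> 0" "real (card {j\<in>J. s j \<noteq> 0}) \<le> 19 * real n / \<epsilon>^2"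
    "\<And>x. x \<in> carrier_vec n \<Longrightarrow> (1 - \<epsilon>) * quad_form frame x \<le> quad_form (gram s) x"
    "\<And>x. x \<in> carrier_vec n \<Longrightarrow> quad_form (gram s) x \<le> (1 + \<epsilon>) * quad_form frame x"
proof -
  define q where "q = nat \<lceil>18 * real n / \<epsilon>^2\<rceil>"
  have q_ge: "real q \<ge> 18 * real n / \<epsilon>^2" unfolding q_def by linarith
  have "real q \<le> 18 * real n / \<epsilon>^2 + 1" unfolding q_def using \<epsilon> by (simp add: of_nat_nat)
  moreover have "1 \<le> real n / \<epsilon>^2" using n \<epsilon> by (simp add: field_simps power_le_one order_trans[of "\<epsilon>^2" 1])
  ultimately have q_le: "real q \<le> 19 * real n / \<epsilon>^2" by (simp add: add_divide_distrib[symmetric])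
  obtain s u l where s: "\<forall>j. s j \<ge> 0" "card {j\<in>J. s j \<noteq> 0} \<le> q" and u: "u > 0"
    and ul: "(1 - \<epsilon>) * u \<le> (1 + \<epsilon>) * l"
    and lower: "\<And>x. x \<in> carrier_vec n \<Longrightarrow> l * quad_form frame x \<le> quad_form (gram s) x"
    and upper: "\<And>x. x \<in> carrier_vec n \<Longrightarrow> quad_form (gram s) x \<le> u * quad_form frame x"
    using barrier_sandwich[OF n \<epsilon> q_ge] by blast
  define c where "c = (1 + \<epsilon>) / u"
  have c: "c > 0" unfolding c_def using u \<epsilon> by simp
  show ?thesis
  proof
    show "\<forall>j. c * s j \<ge> 0" using c s(1) by simp
    have "{j\<in>J. c * s j \<noteq> 0} = {j\<in>J. s j \<noteq> 0}" using c by auto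
    then show "real (card {j\<in>J. c * s j \<noteq> 0}) \<le> 19 * real n / \<epsilon>^2" using s(2) q_le by simp
  next
    fix x :: "real vec" assume x: "x \<in> carrier_vec n"
    have "(1 - \<epsilon>) * quad_form frame x \<le> c * l * quad_form frame x"
      using ul u quad_form_frame_nonneg[OF x] unfolding c_def
      by (intro mult_right_mono) (simp_all add: field_simps)
    also have "\<dots> \<le> c * quad_form (gram s) x" using mult_left_mono[OF lower[OF x], of c] c by simp
    finally show "(1 - \<epsilon>) * quad_form frame x \<le> quad_form (gram (\<lambda>j. c * s j)) x"
      unfolding quad_form_gram_scale[OF x] .
    have "c * quad_form (gram s) x \<le> c * (u * quad_form frame x)"
      using mult_left_mono[OF upper[OF x], of c] c by simp
    also have "\<dots> = (1 + \<epsilon>) * quad_form frame x" unfolding c_def using u by simp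
    finally show "quad_form (gram (\<lambda>j. c * s j)) x \<le> (1 + \<epsilon>) * quad_form frame x"
      unfolding quad_form_gram_scale[OF x] .
  qed
qed

end

section \<open>Spectral sparsification of graphs\<close>

definition laplacian_form :: "('u \<times> 'u) set \<Rightarrow> ('u \<times> 'u \<Rightarrow> real) \<Rightarrow> ('u \<Rightarrow> real) \<Rightarrow> real" where
  "laplacian_form F w y = (\<Sum>e\<in>F. w e * (y (fst e) - y (snd e))^2)"

definition laplacian_sparsifier ::
  "real \<Rightarrow> ('u \<times> 'u) set \<Rightarrow> ('u \<times> 'u \<Rightarrow> real) \<Rightarrow> ('u \<times> 'u) set \<Rightarrow> ('u \<times> 'u \<Rightarrow> real) \<Rightarrow> bool" where
  "laplacian_sparsifier \<epsilon> F w F' w' \<longleftrightarrow> F' \<subseteq> F \<and> (\<forall>e\<in>F'. w' e > 0) \<and>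
     (\<forall>y. (1 - \<epsilon>) * laplacian_form F w y \<le> laplacian_form F' w' y
        \<and> laplacian_form F' w' y \<le> (1 + \<epsilon>) * laplacian_form F w y)"

definition closed_under_edges :: "('u \<times> 'u) set \<Rightarrow> 'u set \<Rightarrow> bool" where
  "closed_under_edges F S \<longleftrightarrow> (\<forall>e\<in>F. fst e \<in> S \<longleftrightarrow> snd e \<in> S)"

text \<open>Coordinates for functions on \<open>U\<close> modulo constants: the vertices other than the root \<open>r\<close>
  are enumerated by \<open>h\<close>, and a function \<open>y\<close> is represented by \<open>y - y r\<close> on them.\<close>

locale grounded_vertices =
  fixes U :: "'u set" and r :: 'u and dim :: nat and h :: "nat \<Rightarrow> 'u"
  assumes finite_U: "finite U" and root: "r \<in> U"
    and enumeration: "bij_betw h {..<dim} (U - {r})"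
begin

definition value_at :: "real vec \<Rightarrow> 'u \<Rightarrow> real" where
  "value_at x a = (\<Sum>i<dim. of_bool (h i = a) * x $ i)"

definition ground :: "('u \<Rightarrow> real) \<Rightarrow> real vec" where
  "ground y = vec dim (\<lambda>i. y (h i) - y r)"

definition incidence :: "'u \<Rightarrow> 'u \<Rightarrow> real vec" where
  "incidence a c = vec dim (\<lambda>i. of_bool (h i = a) - of_bool (h i = c))"

lemma incidence_carrier [simp]: "incidence a c \<in> carrier_vec dim"
  unfolding incidence_def by simp

lemma ground_carrier [simp]: "ground y \<in> carrier_vec dim"
  unfolding ground_def by simp

lemma incidence_scalar_prod:
  "x \<in> carrier_vec dim \<Longrightarrow> incidence a c \<bullet> x = value_at x a - value_at x c"
  unfolding incidence_def value_at_def scalar_prod_def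
  by (simp add: atLeast0LessThan algebra_simps sum_subtractf)

lemma value_at_enumerated:
  assumes "i < dim" shows "value_at x (h i) = x $ i"
proof -
  have "inj_on h {..<dim}" using enumeration by (rule bij_betw_imp_inj_on)
  then have "value_at x (h i) = (\<Sum>k<dim. if k = i then x $ k else 0)"
    unfolding value_at_def using assms by (intro sum.cong) (auto dest: inj_onD)
  then show ?thesis using assms by simp
qed

lemma value_at_not_enumerated:
  assumes "a \<notin> U - {r}" shows "value_at x a = 0"
  unfolding value_at_def using assms enumeration
  by (intro sum.neutral) (auto simp: bij_betw_def)

lemma value_at_ground:
  assumes "a \<in> U" shows "value_at (ground y) a = y a - y r"
proof (cases "a = r")
  case True then show ?thesis using value_at_not_enumerated by simp
next
  case False
  then obtain i where "i < dim" "a = h i"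
    using assms enumeration unfolding bij_betw_def by auto
  then show ?thesis using value_at_enumerated unfolding ground_def by simp
qed

lemma incidence_ground:
  "a \<in> U \<Longrightarrow> c \<in> U \<Longrightarrow> incidence a c \<bullet> ground y = y a - y c"
  by (simp add: incidence_scalar_prod value_at_ground)

lemma laplacian_form_ground:
  assumes FU: "F \<subseteq> U \<times> U" and w: "\<forall>e\<in>F. w e \<ge> 0"
  shows "laplacian_form F (\<lambda>e. g e * w e) y
    = (\<Sum>e\<in>F. g e * ((sqrt (w e) \<cdot>\<^sub>v incidence (fst e) (snd e)) \<bullet> ground y)^2)"
  unfolding laplacian_form_def
proof (intro sum.cong refl)
  fix e assume e: "e \<in> F"
  have "(sqrt (w e) \<cdot>\<^sub>v incidence (fst e) (snd e)) \<bullet> ground y = sqrt (w e) * (y (fst e) - y (snd e))"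
    using e FU incidence_ground[of "fst e" "snd e" y]
      smult_scalar_prod_distrib[OF incidence_carrier ground_carrier] by auto
  then show "g e * w e * (y (fst e) - y (snd e))^2
      = g e * ((sqrt (w e) \<cdot>\<^sub>v incidence (fst e) (snd e)) \<bullet> ground y)^2"
    using w e by (simp add: power_mult_distrib)
qed

text \<open>The grounded incidence vectors of a connected graph span, since a coordinate vector
  orthogonal to all of them is constant along edges and vanishes at the root.\<close>

lemma spanning_family_incidence:
  assumes FU: "F \<subseteq> U \<times> U" and w: "\<forall>e\<in>F. w e > 0"
    and connected: "\<And>S. S \<subseteq> U \<Longrightarrow> closed_under_edges F S \<Longrightarrow> S = {} \<or> S = U"
  shows "spanning_family dim F (\<lambda>e. sqrt (w e) \<cdot>\<^sub>v incidence (fst e) (snd e))"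
proof
  show F: "finite F" using finite_subset[OF FU] finite_U by blast
  show "sqrt (w e) \<cdot>\<^sub>v incidence (fst e) (snd e) \<in> carrier_vec dim" for e by simp
  fix x :: "real vec" assume x: "x \<in> carrier_vec dim" "x \<noteq> 0\<^sub>v dim"
  show "(\<Sum>e\<in>F. ((sqrt (w e) \<cdot>\<^sub>v incidence (fst e) (snd e)) \<bullet> x)^2) > 0"
  proof (rule ccontr)
    assume "\<not> ?thesis"
    then have "(\<Sum>e\<in>F. ((sqrt (w e) \<cdot>\<^sub>v incidence (fst e) (snd e)) \<bullet> x)^2) = 0"
      by (simp add: antisym sum_nonneg)
    then have "\<forall>e\<in>F. (sqrt (w e) \<cdot>\<^sub>v incidence (fst e) (snd e)) \<bullet> x = 0"
      using sum_nonneg_eq_0_iff[OF F, of "\<lambda>e. ((sqrt (w e) \<cdot>\<^sub>v incidence (fst e) (snd e)) \<bullet> x)^2"]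
      by simp
    then have edge: "value_at x (fst e) = value_at x (snd e)" if e: "e \<in> F" for e
    proof -
      have "sqrt (w e) * (value_at x (fst e) - value_at x (snd e)) = 0"
        using \<open>\<forall>e\<in>F. _ = 0\<close> e x(1) by (simp add: incidence_scalar_prod)
      moreover have "sqrt (w e) > 0" using w e by simp
      ultimately show ?thesis by simp
    qed
    have "closed_under_edges F {a\<in>U. value_at x a = 0}"
      unfolding closed_under_edges_def using edge FU by auto
    moreover have "r \<in> {a\<in>U. value_at x a = 0}" using root value_at_not_enumerated by simp
    ultimately have "{a\<in>U. value_at x a = 0} = U" using connected[of "{a\<in>U. value_at x a = 0}"] by auto
    then have "x $ i = 0" if i: "i < dim" for i
    proof -
      have "h i \<in> U" using i enumeration unfolding bij_betw_def by auto
      then have "value_at x (h i) = 0" using \<open>{a\<in>U. value_at x a = 0} = U\<close> by blast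
      then show ?thesis using value_at_enumerated[OF i] by simp
    qed
    then have "x = 0\<^sub>v dim" using x(1) by (intro eq_vecI) auto
    with x(2) show False ..
  qed
qed

end

lemma ex_grounded_vertices:
  assumes "finite U" "r \<in> U"
  obtains h where "grounded_vertices U r (card U - 1) h"
proof -
  have "card {..<card U - 1} = card (U - {r})" using assms by simp
  then obtain h where "bij_betw h {..<card U - 1} (U - {r})"
    using assms by (metis finite_Diff finite_lessThan finite_same_card_bij)
  then show thesis using that assms by (simp add: grounded_vertices_def)
qed

lemma laplacian_form_union:
  "finite A \<Longrightarrow> finite B \<Longrightarrow> A \<inter> B = {} \<Longrightarrow>
    laplacian_form (A \<union> B) w y = laplacian_form A w y + laplacian_form B w y"
  unfolding laplacian_form_def by (rule sum.union_disjoint)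

lemma laplacian_sparsifier_union:
  assumes S1: "laplacian_sparsifier \<epsilon> F1 w F1' w1" and S2: "laplacian_sparsifier \<epsilon> F2 w F2' w2"
    and fin: "finite F1" "finite F2" and disj: "F1 \<inter> F2 = {}"
  shows "laplacian_sparsifier \<epsilon> (F1 \<union> F2) w (F1' \<union> F2') (\<lambda>e. if e \<in> F1' then w1 e else w2 e)"
proof -
  let ?w' = "\<lambda>e. if e \<in> F1' then w1 e else w2 e"
  have sub: "F1' \<subseteq> F1" "F2' \<subseteq> F2" using S1 S2 unfolding laplacian_sparsifier_def by auto
  then have fin': "finite F1'" "finite F2'" and disj': "F1' \<inter> F2' = {}"
    using fin disj finite_subset by auto
  have "laplacian_form F1' ?w' y = laplacian_form F1' w1 y"
    "laplacian_form F2' ?w' y = laplacian_form F2' w2 y" for y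
    unfolding laplacian_form_def using disj' by (auto intro!: sum.cong)
  then have "laplacian_form (F1' \<union> F2') ?w' y = laplacian_form F1' w1 y + laplacian_form F2' w2 y" for y
    using laplacian_form_union[OF fin' disj'] by simp
  moreover have "laplacian_form (F1 \<union> F2) w y = laplacian_form F1 w y + laplacian_form F2 w y" for y
    using laplacian_form_union[OF fin disj] .
  ultimately show ?thesis
    using S1 S2 sub disj' unfolding laplacian_sparsifier_def
    by (auto simp: distrib_left intro: add_mono)
qed

lemma connected_laplacian_sparsifier:
  assumes U: "finite U" and FU: "F \<subseteq> U \<times> U" and w: "\<forall>e\<in>F. w e > 0"
    and \<epsilon>: "0 < \<epsilon>" "\<epsilon> < 1" and U2: "card U \<ge> 2"
    and connected: "\<And>S. S \<subseteq> U \<Longrightarrow> closed_under_edges F S \<Longrightarrow> S = {} \<or> S = U"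
  shows "\<exists>F' w'. laplacian_sparsifier \<epsilon> F w F' w' \<and> real (card F') \<le> 19 * real (card U) / \<epsilon>^2"
proof -
  obtain r where r: "r \<in> U" using U2 by (metis all_not_in_conv card.empty not_numeral_le_zero)
  define m where "m = card U - 1"
  obtain h where "grounded_vertices U r m h" using ex_grounded_vertices[OF U r] unfolding m_def .
  then interpret G: grounded_vertices U r m h .
  define b where "b e = sqrt (w e) \<cdot>\<^sub>v G.incidence (fst e) (snd e)" for e
  interpret B: spanning_family m F b
    unfolding b_def by (rule G.spanning_family_incidence[OF FU w connected])
  have quad: "quad_form (B.gram g) (G.ground y) = laplacian_form F (\<lambda>e. g e * w e) y" for g y
    using G.laplacian_form_ground[OF FU] w by (simp add: B.quad_form_gram b_def less_imp_le)
  have m: "m > 0" unfolding m_def using U2 by simp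
  obtain s where s: "\<forall>j. s j \<ge> 0" "real (card {j\<in>F. s j \<noteq> 0}) \<le> 19 * real m / \<epsilon>^2"
    and lower: "\<And>x. x \<in> carrier_vec m \<Longrightarrow> (1 - \<epsilon>) * quad_form B.frame x \<le> quad_form (B.gram s) x"
    and upper: "\<And>x. x \<in> carrier_vec m \<Longrightarrow> quad_form (B.gram s) x \<le> (1 + \<epsilon>) * quad_form B.frame x"
    using B.spectral_sparsification[OF m \<epsilon>] by blast
  define F' where "F' = {e\<in>F. s e \<noteq> 0}"
  define w' where "w' e = s e * w e" for e
  have "laplacian_form F' w' y = laplacian_form F (\<lambda>e. s e * w e) y" for y
    unfolding laplacian_form_def F'_def w'_def
    by (rule sum.mono_neutral_left) (use B.finite_J in auto)
  then have L': "laplacian_form F' w' y = quad_form (B.gram s) (G.ground y)" for y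
    using quad[of s] by simp
  have L: "laplacian_form F w y = quad_form B.frame (G.ground y)" for y
    using quad[of "\<lambda>_. 1"] by simp
  have "laplacian_sparsifier \<epsilon> F w F' w'"
    unfolding laplacian_sparsifier_def L L'
  proof (intro conjI allI ballI)
    show "F' \<subseteq> F" unfolding F'_def by auto
  next
    fix e assume e: "e \<in> F'"
    have "s e \<ge> 0" using s(1) by blast
    then have "s e > 0" using e unfolding F'_def by auto
    moreover have "w e > 0" using w e unfolding F'_def by auto
    ultimately show "w' e > 0" unfolding w'_def by simp
  qed (use lower upper in simp_all)
  moreover have "19 * real m / \<epsilon>^2 \<le> 19 * real (card U) / \<epsilon>^2"
    unfolding m_def by (simp add: divide_right_mono)
  then have "real (card F') \<le> 19 * real (card U) / \<epsilon>^2"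
    using s(2) unfolding F'_def by linarith
  ultimately show ?thesis by blast
qed

lemma trivial_laplacian_sparsifier:
  assumes U: "finite U" "card U \<le> 1" and FU: "F \<subseteq> U \<times> U"
  shows "laplacian_sparsifier \<epsilon> F w {} w"
proof -
  have "fst e = snd e" if "e \<in> F" for e
    using that FU U card_le_Suc0_iff_eq[OF U(1)] by auto
  then have "laplacian_form F w y = 0" for y
    unfolding laplacian_form_def by (simp add: sum.neutral)
  then show ?thesis unfolding laplacian_sparsifier_def by (simp add: laplacian_form_def)
qed

theorem laplacian_sparsification:
  assumes "finite U" "F \<subseteq> U \<times> U" "\<forall>e\<in>F. w e > 0" "0 < \<epsilon>" "\<epsilon> < 1"
  shows "\<exists>F' w'. laplacian_sparsifier \<epsilon> F w F' w' \<and> real (card F') \<le> 19 * real (card U) / \<epsilon>^2"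
  using assms
proof (induction "card U" arbitrary: U F rule: less_induct)
  case less
  note U = less.prems(1) and FU = less.prems(2) and w = less.prems(3) and \<epsilon> = less.prems(4,5)
  show ?case
  proof (cases "\<exists>S. S \<subseteq> U \<and> closed_under_edges F S \<and> S \<noteq> {} \<and> S \<noteq> U")
    case True
    then obtain S where S: "S \<subseteq> U" "closed_under_edges F S" "S \<noteq> {}" "S \<noteq> U" by blast
    define F1 where "F1 = {e\<in>F. fst e \<in> S}"
    define F2 where "F2 = {e\<in>F. fst e \<notin> S}"
    have F1S: "F1 \<subseteq> S \<times> S" and F2S: "F2 \<subseteq> (U - S) \<times> (U - S)"
      using S(2) FU unfolding F1_def F2_def closed_under_edges_def by auto
    have fin: "finite S" "finite (U - S)" using S(1) U finite_subset by auto
    have card: "card S < card U" "card (U - S) < card U"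
      using S U by (auto intro: psubset_card_mono)
    obtain F1' w1 where R1: "laplacian_sparsifier \<epsilon> F1 w F1' w1" "real (card F1') \<le> 19 * real (card S) / \<epsilon>^2"
      using less.hyps[OF card(1) fin(1) F1S _ \<epsilon>] w unfolding F1_def by auto
    obtain F2' w2 where R2: "laplacian_sparsifier \<epsilon> F2 w F2' w2" "real (card F2') \<le> 19 * real (card (U - S)) / \<epsilon>^2"
      using less.hyps[OF card(2) fin(2) F2S _ \<epsilon>] w unfolding F2_def by auto
    have F: "F = F1 \<union> F2" "F1 \<inter> F2 = {}" "finite F1" "finite F2"
      using finite_subset[OF FU] U unfolding F1_def F2_def by auto
    have "real (card (F1' \<union> F2')) \<le> 19 * real (card S) / \<epsilon>^2 + 19 * real (card (U - S)) / \<epsilon>^2"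
      using card_Un_le[of F1' F2'] R1(2) R2(2) by linarith
    also have "\<dots> = 19 * real (card U) / \<epsilon>^2"
      using card_Diff_subset[OF fin(1) S(1)] card_mono[OF U S(1)]
      by (simp add: add_divide_distrib[symmetric] of_nat_diff algebra_simps)
    finally show ?thesis
      using laplacian_sparsifier_union[OF R1(1) R2(1) F(3,4,2)] unfolding F(1) by blast
  next
    case False
    show ?thesis
    proof (cases "card U \<ge> 2")
      case True
      then show ?thesis using connected_laplacian_sparsifier[OF U FU w \<epsilon>] False by blast
    next
      case False
      then show ?thesis using trivial_laplacian_sparsifier[OF U _ FU] by fastforce
    qed
  qed
qed

section \<open>Sparsification of binary CSPs\<close>

lemma singleton_2x2_witness:
  assumes "has_singleton_2x2 D E P"
  obtains b1 b2 c1 c2 where "b1 \<in> D" "b2 \<in> D" "c1 \<in> E" "c2 \<in> E"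
    "P b1 c1" "\<not> P b1 c2" "\<not> P b2 c1" "\<not> P b2 c2"
proof -
  obtain B C where B: "B \<subseteq> D" "card B = 2" and C: "C \<subseteq> E" "card C = 2"
    and one: "card {(b, c). b \<in> B \<and> c \<in> C \<and> P b c} = 1"
    using assms unfolding has_singleton_2x2_def by blast
  obtain p where "{(b, c). b \<in> B \<and> c \<in> C \<and> P b c} = {p}"
    using one by (rule card_1_singletonE)
  moreover obtain b1 c1 where "p = (b1, c1)" by fastforce
  ultimately have p: "{(b, c). b \<in> B \<and> c \<in> C \<and> P b c} = {(b1, c1)}" by simp
  then have b1c1: "b1 \<in> B" "c1 \<in> C" "P b1 c1" by auto
  have notP: "\<not> P b c" if "b \<in> B" "c \<in> C" "(b, c) \<noteq> (b1, c1)" for b c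
    using p that by blast
  obtain b2 where b2: "b2 \<in> B" "b2 \<noteq> b1" using B(2) b1c1(1) by (metis card_2_iff')
  obtain c2 where c2: "c2 \<in> C" "c2 \<noteq> c1" using C(2) b1c1(2) by (metis card_2_iff')
  show thesis
    by (rule that[of b1 b2 c1 c2]) (use B(1) C(1) b1c1 b2 c2 notP in auto)
qed

text \<open>Otherwise the sparsifier would have value \<open>0\<close> on an assignment of positive value.\<close>

lemma sparsifier_keeps_unique_satisfied:
  assumes sp: "is_sparsifier D E P \<epsilon> V Cs w Cs' w'" and \<epsilon>: "\<epsilon> < 1" and Cs: "finite Cs"
    and A: "valid_assignment D E V Cs A" and pq: "(p, q) \<in> Cs" "w (p, q) > 0"
    and unique: "\<And>u v. (u, v) \<in> Cs \<Longrightarrow> P (A u) (A v) \<longleftrightarrow> (u, v) = (p, q)"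
  shows "(p, q) \<in> Cs'"
proof (rule ccontr)
  assume "(p, q) \<notin> Cs'"
  have sub: "Cs' \<subseteq> Cs" using sp unfolding is_sparsifier_def by blast
  have "csp_val P Cs w A = (\<Sum>c\<in>Cs. if c = (p, q) then w c else 0)"
    unfolding csp_val_def
  proof (intro sum.cong refl)
    fix c assume c: "c \<in> Cs"
    obtain u v where uv: "c = (u, v)" by (cases c)
    show "(case c of (u, v) \<Rightarrow> w (u, v) * (if P (A u) (A v) then 1 else 0))
        = (if c = (p, q) then w c else 0)"
      using unique[of u v] c unfolding uv by auto
  qed
  then have "csp_val P Cs w A = w (p, q)" using Cs pq(1) by simp
  moreover have "csp_val P Cs' w' A = 0"
    unfolding csp_val_def using sub unique \<open>(p, q) \<notin> Cs'\<close> by (intro sum.neutral) auto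
  moreover have "(1 - \<epsilon>) * csp_val P Cs w A \<le> csp_val P Cs' w' A"
    using sp A unfolding is_sparsifier_def by blast
  ultimately show False using \<epsilon> pq(2) by (simp add: mult_le_0_iff)
qed

lemma singleton_2x2_quadratic_lower_bound:
  assumes "has_singleton_2x2 D E P" and \<epsilon>: "\<epsilon> < 1"
  shows "\<exists>c::real. c > 0 \<and> (\<forall>N::nat. \<exists>n\<ge>N. \<exists>(V::nat set) Cs w.
           card V = n \<and> csp_instance V Cs w \<and>
           (\<forall>Cs' w'. is_sparsifier D E P \<epsilon> V Cs w Cs' w' \<longrightarrow> real (card Cs') \<ge> c * real n ^ 2))"
proof (intro exI[of _ "1 / 4"] conjI allI)
  obtain b1 b2 c1 c2 where bc: "b1 \<in> D" "b2 \<in> D" "c1 \<in> E" "c2 \<in> E"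
    and P: "P b1 c1" "\<not> P b1 c2" "\<not> P b2 c1" "\<not> P b2 c2"
    using singleton_2x2_witness[OF assms(1)] by blast
  fix N :: nat
  define m where "m = Suc N"
  define V where "V = {..<2 * m}"
  define Cs where "Cs = {..<m} \<times> {m..<2 * m}"
  define w :: "nat \<times> nat \<Rightarrow> real" where "w = (\<lambda>_. 1)"
  have inst: "csp_instance V Cs w" unfolding csp_instance_def V_def Cs_def w_def by auto
  have keep: "Cs \<subseteq> Cs'" if sp: "is_sparsifier D E P \<epsilon> V Cs w Cs' w'" for Cs' w'
  proof (clarify)
    fix p q assume pq: "(p, q) \<in> Cs"
    define A where "A v = (if v < m then (if v = p then b1 else b2) else (if v = q then c1 else c2))" for v
    have "valid_assignment D E V Cs A"
      unfolding valid_assignment_def A_def V_def Cs_def using bc by auto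
    moreover have "P (A u) (A v) \<longleftrightarrow> (u, v) = (p, q)" if "(u, v) \<in> Cs" for u v
      using that pq P unfolding Cs_def A_def by auto
    ultimately show "(p, q) \<in> Cs'"
      using sparsifier_keeps_unique_satisfied[OF sp \<epsilon> _ _ pq] unfolding Cs_def w_def by simp
  qed
  have card_Cs: "card Cs = m * m" unfolding Cs_def by (simp add: card_cartesian_product)
  have card_V: "card V = 2 * m" unfolding V_def by simp
  show "\<exists>n\<ge>N. \<exists>(V::nat set) Cs w. card V = n \<and> csp_instance V Cs w \<and>
      (\<forall>Cs' w'. is_sparsifier D E P \<epsilon> V Cs w Cs' w' \<longrightarrow> real (card Cs') \<ge> 1 / 4 * real n ^ 2)"
  proof (intro exI[of _ "2 * m"] exI[of _ V] exI[of _ Cs] exI[of _ w] conjI allI impI)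
    fix Cs' w' assume sp: "is_sparsifier D E P \<epsilon> V Cs w Cs' w'"
    then have "Cs' = Cs" using keep[OF sp] unfolding is_sparsifier_def by blast
    then show "real (card Cs') \<ge> 1 / 4 * real (2 * m) ^ 2"
      using card_Cs by (simp add: power2_eq_square)
  qed (use inst card_V in \<open>simp_all add: m_def\<close>)
qed simp

lemma no_singleton_2x2_neq_labelling:
  assumes no_singleton: "\<not> has_singleton_2x2 D E P"
  obtains labD labE :: "'a \<Rightarrow> 'a set" where "\<And>a b. a \<in> D \<Longrightarrow> b \<in> E \<Longrightarrow> P a b \<longleftrightarrow> labD a \<noteq> labE b"
proof -
  define Z where "Z a = {b\<in>E. \<not> P a b}" for a
  have laminar: "Z a1 \<subseteq> Z a2" if a: "a1 \<in> D" "a2 \<in> D" and b: "b \<in> Z a1" "b \<in> Z a2" for a1 a2 b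
  proof
    fix b' assume b': "b' \<in> Z a1"
    show "b' \<in> Z a2"
    proof (rule ccontr)
      assume "b' \<notin> Z a2"
      then have "P a2 b'" "b' \<in> E" using b' unfolding Z_def by auto
      then have "a1 \<noteq> a2" "b \<noteq> b'" and singleton: "{(x, y). x \<in> {a1, a2} \<and> y \<in> {b, b'} \<and> P x y} = {(a2, b')}"
        using b b' unfolding Z_def by auto
      moreover have "{a1, a2} \<subseteq> D" "{b, b'} \<subseteq> E" using a b \<open>b' \<in> E\<close> unfolding Z_def by auto
      ultimately have "has_singleton_2x2 D E P"
        unfolding has_singleton_2x2_def by (intro exI[of _ "{a1, a2}"] exI[of _ "{b, b'}"]) simp
      with no_singleton show False ..
    qed
  qed
  define labE where "labE b = insert b (\<Union>{Z a |a. a \<in> D \<and> b \<in> Z a})" for b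
  have labE: "labE b = Z a" if "a \<in> D" "b \<in> Z a" for a b
    unfolding labE_def using laminar[of _ a b] that by blast
  show thesis
  proof (rule that[of Z labE])
    fix a b assume "a \<in> D" "b \<in> E"
    then show "P a b \<longleftrightarrow> Z a \<noteq> labE b"
      using labE[of a b] unfolding labE_def Z_def by auto
  qed
qed

definition cover_edge :: "'v \<times> 'v \<Rightarrow> ('v \<times> bool) \<times> ('v \<times> bool)" where
  "cover_edge e = ((fst e, False), (snd e, True))"

lemma inj_cover_edge: "inj cover_edge"
  unfolding cover_edge_def inj_def by auto

lemma cover_edge_simps [simp]: "fst (cover_edge e) = (fst e, False)" "snd (cover_edge e) = (snd e, True)"
  unfolding cover_edge_def by simp_all

lemma sum_indicator_diff_squared:
  assumes "finite L" "p \<in> L" "q \<in> L"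
  shows "(\<Sum>c\<in>L. (of_bool (p = c) - of_bool (q = c))^2) = (if p = q then 0 else (2::real))"
proof (cases "p = q")
  case False
  then have "(\<Sum>c\<in>L. (of_bool (p = c) - of_bool (q = c))^2) = (\<Sum>c\<in>L. of_bool (p = c) + of_bool (q = c) :: real)"
    by (intro sum.cong) auto
  then show ?thesis using assms False by (simp add: sum.distrib)
qed simp

text \<open>On the bipartite double cover (first positions on one side, second positions on the other),
  summing the Laplacian forms of the indicators of all labels counts each constraint twice
  exactly when the labels of its endpoints differ.\<close>

lemma csp_val_as_laplacian_forms:
  fixes A :: "'v \<Rightarrow> 'a" and labD labE :: "'a \<Rightarrow> 'l"
  assumes V: "finite V" and C: "C \<subseteq> V \<times> V"
    and valid: "\<And>u v. (u, v) \<in> C \<Longrightarrow> A u \<in> D \<and> A v \<in> E"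
    and lab: "\<And>a b. a \<in> D \<Longrightarrow> b \<in> E \<Longrightarrow> P a b \<longleftrightarrow> labD a \<noteq> labE b"
    and w': "\<And>e. e \<in> C \<Longrightarrow> w' (cover_edge e) = w e"
  defines "L \<equiv> labD ` A ` V \<union> labE ` A ` V"
    and "y \<equiv> \<lambda>c (v, second). of_bool ((if second then labE (A v) else labD (A v)) = c)"
  shows "(\<Sum>c\<in>L. laplacian_form (cover_edge ` C) w' (y c)) = 2 * csp_val P C w A"
proof -
  have L: "finite L" unfolding L_def using V by simp
  have "(\<Sum>c\<in>L. laplacian_form (cover_edge ` C) w' (y c))
      = (\<Sum>c\<in>L. \<Sum>(u, v)\<in>C. w (u, v) * (of_bool (labD (A u) = c) - of_bool (labE (A v) = c))^2)"
    unfolding laplacian_form_def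
    by (simp add: sum.reindex[OF inj_on_subset[OF inj_cover_edge subset_UNIV]] y_def w' case_prod_beta
        cong: sum.cong)
  also have "\<dots> = (\<Sum>(u, v)\<in>C. w (u, v) * (\<Sum>c\<in>L. (of_bool (labD (A u) = c) - of_bool (labE (A v) = c))^2))"
    by (subst sum.swap) (simp add: sum_distrib_left case_prod_beta)
  also have "\<dots> = (\<Sum>(u, v)\<in>C. 2 * (w (u, v) * (if P (A u) (A v) then 1 else 0)))"
  proof (intro sum.cong refl, clarify)
    fix u v assume uv: "(u, v) \<in> C"
    then have "labD (A u) \<in> L" "labE (A v) \<in> L" using C unfolding L_def by auto
    then show "w (u, v) * (\<Sum>c\<in>L. (of_bool (labD (A u) = c) - of_bool (labE (A v) = c))^2)
        = 2 * (w (u, v) * (if P (A u) (A v) then 1 else 0))"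
      using sum_indicator_diff_squared[OF L] lab valid[OF uv] by simp
  qed
  also have "\<dots> = 2 * csp_val P C w A"
    unfolding csp_val_def by (simp add: sum_distrib_left case_prod_beta)
  finally show ?thesis .
qed

lemma csp_sparsifier_of_cover_sparsifier:
  fixes D E :: "'a set" and V :: "'v set" and labD labE :: "'a \<Rightarrow> 'l"
  assumes V: "finite V" and CsV: "Cs \<subseteq> V \<times> V"
    and lab: "\<And>a b. a \<in> D \<Longrightarrow> b \<in> E \<Longrightarrow> P a b \<longleftrightarrow> labD a \<noteq> labE b"
    and wF: "\<And>c. c \<in> Cs \<Longrightarrow> wF (cover_edge c) = w c"
    and F': "laplacian_sparsifier \<epsilon> (cover_edge ` Cs) wF F' wF'"
  shows "is_sparsifier D E P \<epsilon> V Cs w {c\<in>Cs. cover_edge c \<in> F'} (\<lambda>c. wF' (cover_edge c))"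
proof -
  define Cs' where "Cs' = {c\<in>Cs. cover_edge c \<in> F'}"
  have sub: "Cs' \<subseteq> Cs" unfolding Cs'_def by auto
  have F'_eq: "F' = cover_edge ` Cs'"
    using F' unfolding Cs'_def laplacian_sparsifier_def by auto
  have "is_sparsifier D E P \<epsilon> V Cs w Cs' (\<lambda>c. wF' (cover_edge c))"
    unfolding is_sparsifier_def
  proof (intro conjI allI impI ballI)
    show "wF' (cover_edge c) > 0" if "c \<in> Cs'" for c
      using F' that unfolding Cs'_def laplacian_sparsifier_def by auto
    fix A assume "valid_assignment D E V Cs A"
    then have valid: "\<And>u v. (u, v) \<in> Cs \<Longrightarrow> A u \<in> D \<and> A v \<in> E"
      unfolding valid_assignment_def by auto
    define L where "L = labD ` A ` V \<union> labE ` A ` V"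
    define y :: "'l \<Rightarrow> 'v \<times> bool \<Rightarrow> real"
      where "y = (\<lambda>c (v, second). of_bool ((if second then labE (A v) else labD (A v)) = c))"
    have val: "(\<Sum>c\<in>L. laplacian_form (cover_edge ` Cs) wF (y c)) = 2 * csp_val P Cs w A"
      unfolding L_def y_def
      by (rule csp_val_as_laplacian_forms[where D = D and E = E]) (use V CsV valid lab wF in auto)
    have val': "(\<Sum>c\<in>L. laplacian_form F' wF' (y c)) = 2 * csp_val P Cs' (\<lambda>c. wF' (cover_edge c)) A"
      unfolding L_def y_def F'_eq
      by (rule csp_val_as_laplacian_forms[where D = D and E = E]) (use V CsV sub valid lab in auto)
    have "(\<Sum>c\<in>L. (1 - \<epsilon>) * laplacian_form (cover_edge ` Cs) wF (y c)) \<le> (\<Sum>c\<in>L. laplacian_form F' wF' (y c))"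
      "(\<Sum>c\<in>L. laplacian_form F' wF' (y c)) \<le> (\<Sum>c\<in>L. (1 + \<epsilon>) * laplacian_form (cover_edge ` Cs) wF (y c))"
      using F' unfolding laplacian_sparsifier_def by (auto intro: sum_mono)
    then show "(1 - \<epsilon>) * csp_val P Cs w A \<le> csp_val P Cs' (\<lambda>c. wF' (cover_edge c)) A"
      and "csp_val P Cs' (\<lambda>c. wF' (cover_edge c)) A \<le> (1 + \<epsilon>) * csp_val P Cs w A"
      unfolding val val' sum_distrib_left[symmetric] by simp_all
  qed (rule sub)
  then show ?thesis unfolding Cs'_def .
qed

lemma no_singleton_2x2_linear_sparsifier:
  fixes D E :: "'a set" and V :: "'v set"
  assumes no_singleton: "\<not> has_singleton_2x2 D E P" and inst: "csp_instance V Cs w"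
    and \<epsilon>: "0 < \<epsilon>" "\<epsilon> < 1"
  shows "\<exists>Cs' w'. is_sparsifier D E P \<epsilon> V Cs w Cs' w' \<and> real (card Cs') \<le> 38 * real (card V) / \<epsilon>^2"
proof -
  obtain labD labE :: "'a \<Rightarrow> 'a set" where lab: "\<And>a b. a \<in> D \<Longrightarrow> b \<in> E \<Longrightarrow> P a b \<longleftrightarrow> labD a \<noteq> labE b"
    using no_singleton_2x2_neq_labelling[OF no_singleton] by blast
  have V: "finite V" and CsV: "Cs \<subseteq> V \<times> V" and w: "\<forall>c\<in>Cs. w c > 0"
    using inst unfolding csp_instance_def by auto
  define U where "U = V \<times> (UNIV :: bool set)"
  define wF where "wF e = w (fst (fst e), fst (snd e))" for e :: "('v \<times> bool) \<times> ('v \<times> bool)"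
  have wF: "wF (cover_edge c) = w c" for c unfolding wF_def by simp
  have cover: "finite U" "cover_edge ` Cs \<subseteq> U \<times> U" "\<forall>e\<in>cover_edge ` Cs. wF e > 0"
    using V CsV w unfolding U_def by (auto simp: wF_def cover_edge_def)
  from laplacian_sparsification[OF cover \<epsilon>] obtain F' wF'
    where F': "laplacian_sparsifier \<epsilon> (cover_edge ` Cs) wF F' wF'"
      and card_F': "real (card F') \<le> 19 * real (card U) / \<epsilon>^2"
    by (elim exE conjE)
  have "cover_edge ` {c\<in>Cs. cover_edge c \<in> F'} = F'"
    using F' unfolding laplacian_sparsifier_def by auto
  moreover have "card (cover_edge ` {c\<in>Cs. cover_edge c \<in> F'}) = card {c\<in>Cs. cover_edge c \<in> F'}"
    by (rule card_image[OF inj_on_subset[OF inj_cover_edge subset_UNIV]])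
  ultimately have "card F' = card {c\<in>Cs. cover_edge c \<in> F'}" by simp
  moreover have "card U = 2 * card V" unfolding U_def by (simp add: card_cartesian_product)
  moreover have "is_sparsifier D E P \<epsilon> V Cs w {c\<in>Cs. cover_edge c \<in> F'} (\<lambda>c. wF' (cover_edge c))"
    by (rule csp_sparsifier_of_cover_sparsifier[where labD = labD and labE = labE, OF V CsV lab wF F'])
  ultimately show ?thesis using card_F' by auto
qed

theorem theorem10:
  fixes D E :: "'a set" and P :: "'a \<Rightarrow> 'a \<Rightarrow> bool"
  assumes "finite D" "finite E" "card D \<ge> 2" "card E \<ge> 2"
  shows "(has_singleton_2x2 D E P \<longrightarrow>
           (\<forall>\<epsilon>::real. 0 < \<epsilon> \<and> \<epsilon> < 1 \<longrightarrow>
             (\<exists>c::real. c > 0 \<and> (\<forall>N::nat. \<exists>n\<ge>N. \<exists>(V::nat set) Cs w.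
                 card V = n \<and> csp_instance V Cs w \<and>
                 (\<forall>Cs' w'. is_sparsifier D E P \<epsilon> V Cs w Cs' w' \<longrightarrow>
                     real (card Cs') \<ge> c * real n ^ 2)))))
       \<and> (\<not> has_singleton_2x2 D E P \<longrightarrow>
           (\<exists>K::real. K > 0 \<and> (\<forall>\<epsilon>::real. 0 < \<epsilon> \<and> \<epsilon> < 1 \<longrightarrow>
             (\<forall>(V::'v set) Cs w. csp_instance V Cs w \<longrightarrow>
                (\<exists>Cs' w'. is_sparsifier D E P \<epsilon> V Cs w Cs' w' \<and>
                   real (card Cs') \<le> K * real (card V) / \<epsilon> ^ 2)))))"
  using singleton_2x2_quadratic_lower_bound no_singleton_2x2_linear_sparsifier
  by (metis zero_less_numeral)

end
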